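(* Let $q>1$, $\beta>0$, $\mu\in\mathbb{R}$, $\alpha\in\mathbb{R}$, $\rho>0$, and let $U_d$ be an open unbounded sector with vertex at $0$ and bisecting direction $d$, and $\delta\in\mathbb{R}$ such that the point $-\delta$ has positive distance to $U_d\cup D(0,\rho)$. Let $Q(X),R(X)\in\mathbb{C}[X]$ with $\deg(R)\ge\deg(Q)$ and $R(im)\neq0$ for all $m\in\mathbb{R}$, let $b:\mathbb{R}\to\mathbb{C}$ be continuous with $|b(m)|\le 1/|R(im)|$ for all $m\in\mathbb{R}$, and assume $\mu>\deg(Q)+1$. Let $1<k\le\kappa$, where $k$ is an integer. Let $c_h\in E_{(\beta,\mu)}$ for $h=0,\dots,p_1$ and $$\varphi_k(\tau,m)=\sum_{h=0}^{p_1}c_h(m)\frac{\tau^h}{(q^{1/k})^{h(h-1)/2}}.$$ For $f\in \mathrm{Exp}^q_{(\kappa,\beta,\mu,\alpha,\rho)}$ define $$\varphi_k(\tau,m)\star^{Q}_{q;1/k}f(\tau,m):=\sum_{h=0}^{p_1}\frac{\tau^h}{(q^{1/k})^{h(h-1)/2}}\int_{-\infty}^{+\infty}c_h(m-m_1)Q(im_1)f(q^{-h/k}\tau,m_1)\,dm_1 .$$ Then for every $f\in\mathrm{Exp}^q_{(\kappa,\beta,\mu,\alpha,\rho)}$, the function $b(m)\,\varphi_k(\tau,m)\star^{Q}_{q;1/k}f(\tau,m)$ belongs to $\mathrm{Exp}^q_{(\kappa,\beta,\mu,\alpha,\rho)}$, and there exist constants $C_{3,h}>0$ ($0\le h\le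 p_1$), depending on $\mu,q,\alpha,k,\kappa,Q,R,\delta$, such that $$\left\|b(m)\varphi_k(\tau,m)\star^{Q}_{q;1/k}f(\tau,m)\right\|_{(\kappa,\beta,\mu,\alpha,\rho)}\le\Big(\sum_{h=0}^{p_1}C_{3,h}\|c_h\|_{(\beta,\mu)}\Big)\|f\|_{(\kappa,\beta,\mu,\alpha,\rho)}.$$
   Context: $E_{(\beta,\mu)}$ is the Banach space of continuous functions $h:\mathbb{R}\to\mathbb{C}$ with $\|h\|_{(\beta,\mu)}=\sup_{m\in\mathbb{R}}(1+|m|)^{\mu}e^{\beta|m|}|h(m)|<\infty$. For $k>0$, $\mathrm{Exp}^q_{(k,\beta,\mu,\alpha,\rho)}$ is the Banach space of continuous functions $h(\tau,m)$ on $(U_d\cup\overline{D}(0,\rho))\times\mathbb{R}$, holomorphic in $\tau$ on $U_d\cup D(0,\rho)$, such that $$\|h\|_{(k,\beta,\mu,\alpha,\rho)}=\sup_{\tau\in U_d\cup\overline D(0,\rho),\,m\in\mathbb{R}}(1+|m|)^{\mu}e^{\beta|m|}\exp\Big(-\frac{k}{2}\frac{\log^2|\tau+\delta|}{\log q}-\alpha\log|\tau+\delta|\Big)|h(\tau,m)|<\infty .$$ *)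

theory Defs
  imports "HOL-Analysis.Analysis" "HOL-Computational_Algebra.Polynomial"
begin

definition sector :: "real \<Rightarrow> real \<Rightarrow> complex set" where
  "sector d a = {z. z \<noteq> 0 \<and> (\<exists>t. \<bar>t - d\<bar> < a \<and> z = complex_of_real (cmod z) * cis t)}"

definition E_norm :: "real \<Rightarrow> real \<Rightarrow> (real \<Rightarrow> complex) \<Rightarrow> real" where
  "E_norm \<beta> \<mu> h = (SUP m\<in>UNIV. (1 + \<bar>m\<bar>) powr \<mu> * exp (\<beta> * \<bar>m\<bar>) * cmod (h m))"

definition E_space :: "real \<Rightarrow> real \<Rightarrow> (real \<Rightarrow> complex) set" where
  "E_space \<beta> \<mu> = {h. continuous_on UNIV h \<and>
      bdd_above ((\<lambda>m. (1 + \<bar>m\<bar>) powr \<mu> * exp (\<beta> * \<bar>m\<bar>) * cmod (h m)) ` UNIV)}"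

definition exp_weight ::
  "real \<Rightarrow> real \<Rightarrow> real \<Rightarrow> real \<Rightarrow> real \<Rightarrow> real \<Rightarrow> complex \<Rightarrow> real \<Rightarrow> real" where
  "exp_weight q \<delta> k \<beta> \<mu> \<alpha> \<tau> m =
     (1 + \<bar>m\<bar>) powr \<mu> * exp (\<beta> * \<bar>m\<bar>) *
     exp (- (k / 2) * (ln (cmod (\<tau> + complex_of_real \<delta>)))\<^sup>2 / ln q
          - \<alpha> * ln (cmod (\<tau> + complex_of_real \<delta>)))"

definition Exp_norm ::
  "real \<Rightarrow> complex set \<Rightarrow> real \<Rightarrow> real \<Rightarrow> real \<Rightarrow> real \<Rightarrow> real \<Rightarrow> real
     \<Rightarrow> (complex \<Rightarrow> real \<Rightarrow> complex) \<Rightarrow> real" where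
  "Exp_norm q U \<delta> k \<beta> \<mu> \<alpha> \<rho> h =
     (SUP p\<in>(U \<union> cball 0 \<rho>) \<times> UNIV.
        exp_weight q \<delta> k \<beta> \<mu> \<alpha> (fst p) (snd p) * cmod (h (fst p) (snd p)))"

definition Exp_space ::
  "real \<Rightarrow> complex set \<Rightarrow> real \<Rightarrow> real \<Rightarrow> real \<Rightarrow> real \<Rightarrow> real \<Rightarrow> real
     \<Rightarrow> (complex \<Rightarrow> real \<Rightarrow> complex) set" where
  "Exp_space q U \<delta> k \<beta> \<mu> \<alpha> \<rho> = {h.
     continuous_on ((U \<union> cball 0 \<rho>) \<times> UNIV) (\<lambda>p. h (fst p) (snd p)) \<and>
     (\<forall>m. (\<lambda>\<tau>. h \<tau> m) holomorphic_on (U \<union> ball 0 \<rho>)) \<and>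
     bdd_above ((\<lambda>p. exp_weight q \<delta> k \<beta> \<mu> \<alpha> (fst p) (snd p) * cmod (h (fst p) (snd p)))
                  ` ((U \<union> cball 0 \<rho>) \<times> UNIV))}"

definition q_conv ::
  "real \<Rightarrow> nat \<Rightarrow> nat \<Rightarrow> (nat \<Rightarrow> real \<Rightarrow> complex) \<Rightarrow> complex poly
     \<Rightarrow> (complex \<Rightarrow> real \<Rightarrow> complex) \<Rightarrow> complex \<Rightarrow> real \<Rightarrow> complex" where
  "q_conv q k p1 c Q f \<tau> m =
     (\<Sum>h = 0..p1. \<tau> ^ h / complex_of_real ((q powr (1 / real k)) powr (real h * (real h - 1) / 2))
        * (LINT m1|lborel. c h (m - m1) * poly Q (\<i> * complex_of_real m1)
              * f (complex_of_real (q powr (- real h / real k)) * \<tau>) m1))"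

end

theory Submission
  imports Defs "HOL-Complex_Analysis.Complex_Analysis"
begin

(* In the variable m the weight
   (1 + |m|)^\<mu> e^(\<beta>|m|) survives convolution up to the loss (1 + |m|)^(deg Q) caused by
   Q(i m_1), because (1 + |m - x|)^(-\<mu>) (1 + |x|)^(-(\<mu> - deg Q)) integrates to
   O((1 + |m|)^(-(\<mu> - deg Q))); this loss is paid for by |b(m)| \<le> 1/|R(i m)| and deg R \<ge> deg Q.
   In the variable \<tau>, passing from \<tau> to q^(-h/k) \<tau> shifts log|\<tau> + \<delta>| by about -h log q / k,
   so the Gaussian weight exp(-\<kappa> log^2|\<tau> + \<delta>| / (2 log q)) gains a factor |\<tau> + \<delta>|^(h \<kappa>/k),
   which absorbs the monomial \<tau>^h since k \<le> \<kappa>. Continuity and holomorphy of the parameter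
   integrals follow from dominated convergence and Cauchy's estimate. *)

section \<open>Geometry of the domain\<close>

lemma of_real_mult_mem_sector:
  assumes "z \<in> sector d a" "s > 0"
  shows "complex_of_real s * z \<in> sector d a"
proof -
  from assms obtain t where t: "\<bar>t - d\<bar> < a" "z = complex_of_real (cmod z) * cis t" "z \<noteq> 0"
    unfolding sector_def by auto
  have "complex_of_real s * z = complex_of_real (cmod (complex_of_real s * z)) * cis t"
    using assms(2) by (subst t(2)) (simp add: norm_mult)
  then show ?thesis using t assms(2) unfolding sector_def by auto
qed

lemma open_sector: "open (sector d a)"
proof (rule openI)
  fix z assume z: "z \<in> sector d a"
  from z obtain t where t: "\<bar>t - d\<bar> < a" "z = complex_of_real (cmod z) * cis t" "z \<noteq> 0"
    unfolding sector_def by auto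
  define \<phi> where "\<phi> w = Im (ln (w / z))" for w
  have "isCont (\<lambda>w. ln (w / z)) z"
    using t(3) by (intro isCont_Ln') (auto intro!: continuous_intros)
  then have "isCont \<phi> z" unfolding \<phi>_def by (rule continuous_Im)
  moreover have "\<phi> z = 0" using t(3) by (simp add: \<phi>_def)
  ultimately have "(\<phi> \<longlongrightarrow> 0) (at z)" unfolding isCont_def by simp
  then have small_arg: "\<forall>\<^sub>F w in at z. dist (\<phi> w) 0 < a - \<bar>t - d\<bar>"
    using t(1) by (intro tendstoD) auto
  have nonzero: "\<forall>\<^sub>F w in at z. w \<noteq> 0"
    using tendsto_ident_at t(3) by (rule tendsto_imp_eventually_ne)
  have "\<forall>\<^sub>F w in at z. w \<in> sector d a"
    using small_arg nonzero
  proof eventually_elim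
    case (elim w)
    have "w / z = exp (ln (w / z))" using elim t(3) by simp
    also have "\<dots> = complex_of_real (exp (Re (ln (w/z)))) * cis (\<phi> w)"
      by (simp add: exp_eq_polar \<phi>_def)
    finally have wz: "w / z = complex_of_real (exp (Re (ln (w/z)))) * cis (\<phi> w)" .
    then have "cmod (w / z) = exp (Re (ln (w/z)))"
      by (metis abs_exp_cancel norm_cis norm_mult norm_of_real mult.right_neutral)
    then have wz': "w / z = complex_of_real (cmod w / cmod z) * cis (\<phi> w)"
      using wz by (simp add: norm_divide)
    have "w = z * (w / z)" using t(3) by simp
    also have "\<dots> = complex_of_real (cmod z) * cis t * (complex_of_real (cmod w / cmod z) * cis (\<phi> w))"
      by (subst wz', subst t(2)) simp
    also have "\<dots> = complex_of_real (cmod w) * cis (t + \<phi> w)"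
      using t(3) by (simp add: cis_mult field_simps)
    finally have "w = complex_of_real (cmod w) * cis (t + \<phi> w)" .
    moreover have "\<bar>t + \<phi> w - d\<bar> < a" using elim by (simp add: dist_real_def)
    ultimately show ?case using elim unfolding sector_def by blast
  qed
  then obtain e where e: "e > 0" "\<And>w. w \<noteq> z \<Longrightarrow> dist w z < e \<Longrightarrow> w \<in> sector d a"
    unfolding eventually_at by blast
  show "\<exists>e>0. ball z e \<subseteq> sector d a"
    using e z by (intro exI[of _ e]) (metis dist_commute mem_ball subsetI)
qed

lemma of_real_mult_mem_Un_cball:
  assumes "\<And>z s. z \<in> U \<Longrightarrow> 0 < s \<Longrightarrow> complex_of_real s * z \<in> U"
    and "\<tau> \<in> U \<union> cball 0 \<rho>" "0 < s" "s \<le> 1"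
  shows "complex_of_real s * \<tau> \<in> U \<union> cball 0 \<rho>"
  using assms by (auto simp: norm_mult intro: order_trans[OF mult_left_le_one_le])

lemma of_real_mult_mem_Un_ball:
  assumes "\<And>z s. z \<in> U \<Longrightarrow> 0 < s \<Longrightarrow> complex_of_real s * z \<in> U"
    and "\<tau> \<in> U \<union> ball 0 \<rho>" "0 < s" "s \<le> 1"
  shows "complex_of_real s * \<tau> \<in> U \<union> ball 0 \<rho>"
  using assms by (auto simp: norm_mult intro: le_less_trans[OF mult_left_le_one_le])

lemma infdist_le_dist_closure: "y \<in> closure A \<Longrightarrow> infdist x A \<le> dist x y"
  by (metis infdist_eq_setdist infdist_le setdist_closure_2)

lemma infdist_sector_Un_ball_le:
  assumes "\<rho> > 0" "\<tau> \<in> sector d a \<union> cball 0 \<rho>"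
  shows "infdist (- complex_of_real \<delta>) (sector d a \<union> ball 0 \<rho>) \<le> cmod (\<tau> + complex_of_real \<delta>)"
proof -
  have "\<tau> \<in> closure (sector d a \<union> ball 0 \<rho>)"
    using assms closure_subset[of "sector d a"] by (auto simp: closure_Un)
  then have "infdist (- complex_of_real \<delta>) (sector d a \<union> ball 0 \<rho>) \<le> dist (- complex_of_real \<delta>) \<tau>"
    by (rule infdist_le_dist_closure)
  also have "\<dots> = cmod (\<tau> + complex_of_real \<delta>)" by (simp add: dist_norm norm_minus_commute add.commute)
  finally show ?thesis .
qed

section \<open>Polynomial bounds\<close>

lemma poly_bound_by_degree:
  fixes P :: "'a::real_normed_field poly"
  shows "\<exists>A>0. \<forall>z. norm (poly P z) \<le> A * (1 + norm z) ^ degree P"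
proof -
  define A where "A = 1 + (\<Sum>i\<le>degree P. norm (coeff P i))"
  have A0: "A > 0" unfolding A_def by (simp add: add_pos_nonneg sum_nonneg)
  have "norm (poly P z) \<le> A * (1 + norm z) ^ degree P" for z
  proof -
    have "norm (poly P z) \<le> (\<Sum>i\<le>degree P. norm (coeff P i * z ^ i))"
      unfolding poly_altdef by (rule norm_sum)
    also have "\<dots> \<le> (\<Sum>i\<le>degree P. norm (coeff P i) * (1 + norm z) ^ degree P)"
    proof (rule sum_mono)
      fix i assume "i \<in> {..degree P}"
      then have "norm z ^ i \<le> (1 + norm z) ^ degree P"
      proof -
        have "norm z ^ i \<le> (1 + norm z) ^ i" by (intro power_mono) auto
        also have "\<dots> \<le> (1 + norm z) ^ degree P" using \<open>i \<in> {..degree P}\<close> by (intro power_increasing) auto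
        finally show ?thesis .
      qed
      then show "norm (coeff P i * z ^ i) \<le> norm (coeff P i) * (1 + norm z) ^ degree P"
        by (simp add: norm_mult norm_power mult_left_mono)
    qed
    also have "\<dots> = (\<Sum>i\<le>degree P. norm (coeff P i)) * (1 + norm z) ^ degree P"
      by (simp add: sum_distrib_right)
    also have "\<dots> \<le> A * (1 + norm z) ^ degree P"
      unfolding A_def by (intro mult_right_mono) auto
    finally show ?thesis .
  qed
  with A0 show ?thesis by blast
qed

lemma poly_lower_bound_at_infinity:
  fixes R :: "'a::real_normed_field poly"
  assumes "R \<noteq> 0"
  shows "\<exists>T\<ge>1. \<forall>z. norm z \<ge> T \<longrightarrow> norm (lead_coeff R) * norm z ^ degree R / 2 \<le> norm (poly R z)"
proof -
  define n where "n = degree R"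
  define l where "l = lead_coeff R"
  have l0: "norm l > 0" using assms by (simp add: l_def)
  define As where "As = (\<Sum>i<n. norm (coeff R i))"
  have As0: "As \<ge> 0" unfolding As_def by (simp add: sum_nonneg)
  define T where "T = max 1 (2 * As / norm l)"
  have "norm l * norm z ^ n / 2 \<le> norm (poly R z)" if z: "norm z \<ge> T" for z
  proof -
    have z1: "norm z \<ge> 1" using z by (simp add: T_def)
    have split: "poly R z = l * z ^ n + (\<Sum>i<n. coeff R i * z ^ i)"
      unfolding poly_altdef n_def[symmetric] l_def
      by (simp add: lessThan_Suc_atMost[symmetric] n_def)
    have "norm (\<Sum>i<n. coeff R i * z ^ i) \<le> (\<Sum>i<n. norm (coeff R i) * norm z ^ (n - 1))"
    proof -
      have "norm (\<Sum>i<n. coeff R i * z ^ i) \<le> (\<Sum>i<n. norm (coeff R i * z ^ i))" by (rule norm_sum)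
      also have "\<dots> \<le> (\<Sum>i<n. norm (coeff R i) * norm z ^ (n - 1))"
      proof (rule sum_mono)
        fix i assume "i \<in> {..<n}"
        then have "norm z ^ i \<le> norm z ^ (n - 1)" using z1 by (intro power_increasing) auto
        then show "norm (coeff R i * z ^ i) \<le> norm (coeff R i) * norm z ^ (n - 1)"
          by (simp add: norm_mult norm_power mult_left_mono)
      qed
      finally show ?thesis .
    qed
    also have "\<dots> = As * norm z ^ (n - 1)" by (simp add: As_def sum_distrib_right)
    also have "\<dots> \<le> norm l * norm z ^ n / 2"
    proof (cases n)
      case 0 then show ?thesis by (simp add: As_def)
    next
      case (Suc n')
      have "As \<le> norm l * norm z / 2" using z l0 unfolding T_def by (auto simp: field_simps)
      then have "As * norm z ^ n' \<le> norm l * norm z / 2 * norm z ^ n'"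
        by (intro mult_right_mono) auto
      then show ?thesis using Suc by (simp add: field_simps)
    qed
    finally have b: "norm (\<Sum>i<n. coeff R i * z ^ i) \<le> norm l * norm z ^ n / 2" .
    have "norm (l * z ^ n) \<le> norm (poly R z) + norm (\<Sum>i<n. coeff R i * z ^ i)"
      using split norm_triangle_ineq4[of "poly R z" "\<Sum>i<n. coeff R i * z ^ i"] by simp
    then have "norm l * norm z ^ n \<le> norm (poly R z) + norm (\<Sum>i<n. coeff R i * z ^ i)"
      by (simp add: norm_mult norm_power)
    then show ?thesis using b by simp
  qed
  then show ?thesis unfolding n_def l_def by (intro exI[of _ T]) (auto simp: T_def)
qed

lemma poly_degree_ratio_bounded:
  fixes Q R :: "complex poly"
  assumes "degree Q \<le> degree R" "\<forall>m::real. poly R (\<i> * complex_of_real m) \<noteq> 0"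
  shows "\<exists>B>0. \<forall>m::real. (1 + \<bar>m\<bar>) ^ degree Q / cmod (poly R (\<i> * complex_of_real m)) \<le> B"
proof -
  have R0: "R \<noteq> 0" using assms(2) by auto
  obtain T where T: "T \<ge> 1" "\<And>z. cmod z \<ge> T \<Longrightarrow> cmod (lead_coeff R) * cmod z ^ degree R / 2 \<le> cmod (poly R z)"
    using poly_lower_bound_at_infinity[OF R0] by blast
  have l0: "cmod (lead_coeff R) > 0" using R0 by simp
  define g where "g m = (1 + \<bar>m\<bar>) ^ degree Q / cmod (poly R (\<i> * complex_of_real m))" for m :: real
  have "continuous_on {-T..T} g" unfolding g_def using assms(2)
    by (intro continuous_intros) auto
  then have "bounded (g ` {-T..T})" by (intro compact_imp_bounded compact_continuous_image) auto
  then obtain B1 where B1': "\<forall>x\<in>g ` {-T..T}. norm x \<le> B1"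
    unfolding bounded_iff by blast
  have B1: "\<bar>g m\<bar> \<le> B1" if "m \<in> {-T..T}" for m using B1' that by auto
  define B2 where "B2 = 2 ^ degree Q * 2 / cmod (lead_coeff R)"
  have "g m \<le> B2" if m: "\<bar>m\<bar> \<ge> T" for m
  proof -
    have nz: "cmod (\<i> * complex_of_real m) = \<bar>m\<bar>" by (simp add: norm_mult)
    have low: "cmod (lead_coeff R) * \<bar>m\<bar> ^ degree R / 2 \<le> cmod (poly R (\<i> * complex_of_real m))"
      using T(2)[of "\<i> * complex_of_real m"] m nz by simp
    have m1: "\<bar>m\<bar> \<ge> 1" using m T by simp
    have "(1 + \<bar>m\<bar>) ^ degree Q \<le> (2 * \<bar>m\<bar>) ^ degree Q" using m1 by (intro power_mono) auto
    also have "\<dots> = 2 ^ degree Q * \<bar>m\<bar> ^ degree Q" by (simp add: power_mult_distrib)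
    also have "\<dots> \<le> 2 ^ degree Q * \<bar>m\<bar> ^ degree R"
      using m1 assms(1) by (intro mult_left_mono power_increasing) auto
    finally have up: "(1 + \<bar>m\<bar>) ^ degree Q \<le> 2 ^ degree Q * \<bar>m\<bar> ^ degree R" .
    have pos: "cmod (lead_coeff R) * \<bar>m\<bar> ^ degree R / 2 > 0" using l0 m1 by simp
    have "g m \<le> 2 ^ degree Q * \<bar>m\<bar> ^ degree R / (cmod (lead_coeff R) * \<bar>m\<bar> ^ degree R / 2)"
      unfolding g_def using up low pos by (intro frac_le) auto
    also have "\<dots> = B2" unfolding B2_def using m1 l0 by (simp add: field_simps)
    finally show ?thesis .
  qed
  moreover have "g m \<le> B1" if "\<bar>m\<bar> \<le> T" for m
  proof -
    have "m \<in> {-T..T}" using that by (auto simp: abs_le_iff)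
    then show ?thesis using B1[of m] by linarith
  qed
  ultimately have "g m \<le> max B1 B2" for m
    by (meson linorder_le_cases max.coboundedI1 max.coboundedI2 order_trans)
  moreover have "max B1 B2 > 0" using l0 by (simp add: B2_def max.strict_coboundedI2)
  ultimately show ?thesis unfolding g_def by blast
qed

section \<open>Convolution of polynomially decaying weights\<close>

lemma integrable_bounded_by:
  fixes h :: "'a \<Rightarrow> 'b::{banach,second_countable_topology}"
  assumes "integrable M g" "h \<in> borel_measurable M" "\<And>x. norm (h x) \<le> g x"
  shows "integrable M h"
  using assms by (intro Bochner_Integration.integrable_bound[OF assms(1,2)] AE_I2)
    (metis abs_ge_self order_trans real_norm_def)

lemma integrable_powr_from_one:
  assumes "p > 1"
  shows "integrable lborel (\<lambda>x::real. if x \<in> {1..} then x powr (-p) else 0)"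
proof -
  define h where "h x = (if x \<in> {1..} then x powr (-p) else 0)" for x :: real
  have "((\<lambda>x. x powr (-p)) has_integral - (1 powr (-p + 1)) / (-p + 1)) {1::real..}"
    using assms by (intro has_integral_powr_to_inf) auto
  then have "(h has_integral - (1 powr (-p + 1)) / (-p + 1)) UNIV"
    unfolding h_def by (subst has_integral_restrict_UNIV)
  moreover have "h \<in> borel_measurable borel" "\<And>x. 0 \<le> h x" unfolding h_def by auto
  ultimately have "integral\<^sup>N lborel h = - (1 powr (-p + 1)) / (-p + 1)"
    by (intro nn_integral_has_integral_lborel)
  then show ?thesis
    using \<open>h \<in> borel_measurable borel\<close> \<open>\<And>x. 0 \<le> h x\<close>
    by (intro integrableI_nn_integral_finite[where x="- (1 powr (-p + 1)) / (-p + 1)"]) (auto simp: h_def)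
qed

lemma integrable_one_plus_abs_powr:
  assumes "p > 1"
  shows "integrable lborel (\<lambda>x::real. (1 + \<bar>x\<bar>) powr (-p))"
proof -
  define h where "h x = (if x \<in> {1..} then x powr (-p) else 0)" for x :: real
  have h_nonneg: "h x \<ge> 0" for x by (simp add: h_def)
  have h: "integrable lborel h" unfolding h_def using assms by (rule integrable_powr_from_one)
  then have "integrable lborel (\<lambda>x. h (0 + (-1) * x))" by (intro lborel_integrable_real_affine) auto
  then have dom: "integrable lborel (\<lambda>x. indicator {-1..1} x + h x + h (- x))"
    using h by (intro Bochner_Integration.integrable_add integrable_real_indicator) auto
  have le: "(1 + \<bar>x\<bar>) powr (-p) \<le> indicator {-1..1} x + h x + h (- x)" for x :: real
  proof (cases "\<bar>x\<bar> \<le> 1")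
    case True
    have "(1 + \<bar>x\<bar>) powr (-p) \<le> 1" using assms powr_mono2'[of "-p" 1 "1 + \<bar>x\<bar>"] by simp
    then show ?thesis using True h_nonneg[of x] h_nonneg[of "-x"] by (simp add: indicator_def abs_le_iff)
  next
    case False
    have "(1 + \<bar>x\<bar>) powr (-p) \<le> \<bar>x\<bar> powr (-p)" using assms False by (intro powr_mono2') auto
    moreover have "\<bar>x\<bar> powr (-p) = h x + h (- x)" using False by (auto simp: h_def)
    ultimately show ?thesis using False by (simp add: indicator_def)
  qed
  show ?thesis
  proof (rule Bochner_Integration.integrable_bound[OF dom])
    show "AE x in lborel. norm ((1 + \<bar>x\<bar>) powr (-p)) \<le> norm (indicator {-1..1} x + h x + h (- x))"
      using le by (intro AE_I2) (simp add: order_trans[OF _ abs_ge_self])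
  qed measurable
qed

lemma integrable_one_plus_abs_diff_powr:
  assumes "p > 1"
  shows "integrable lborel (\<lambda>x::real. (1 + \<bar>m - x\<bar>) powr (-p))"
proof -
  have "integrable lborel (\<lambda>x::real. (1 + \<bar>m + (-1) * x\<bar>) powr (-p))"
    using integrable_one_plus_abs_powr[OF assms]
    by (intro lborel_integrable_real_affine[where f="\<lambda>x. (1 + \<bar>x\<bar>) powr (-p)"]) auto
  then show ?thesis by simp
qed

lemma integral_one_plus_abs_diff_powr:
  fixes m p :: real
  shows "(\<integral>x. (1 + \<bar>m - x\<bar>) powr (-p) \<partial>lborel) = (\<integral>x. (1 + \<bar>x\<bar>) powr (-p) \<partial>lborel)"
proof -
  have "(\<integral>x. (1 + \<bar>x\<bar>) powr (-p) \<partial>lborel) = \<bar>-1\<bar> *\<^sub>R (\<integral>x. (1 + \<bar>m + (-1) * x\<bar>) powr (-p) \<partial>lborel)"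
    by (rule lborel_integral_real_affine[where f="\<lambda>x. (1 + \<bar>x\<bar>) powr (-p)"]) simp
  then show ?thesis by simp
qed

text \<open>Splitting according to whether \<open>\<bar>x\<bar>\<close> or \<open>\<bar>m - x\<bar>\<close> is at least \<open>\<bar>m\<bar>/2\<close> gives
  \<open>(1 + \<bar>m\<bar>)\<^sup>a \<le> 2\<^sup>a ((1 + \<bar>m - x\<bar>)\<^sup>a + (1 + \<bar>x\<bar>)\<^sup>a)\<close>; this is the source of the constant.\<close>

definition decay_conv_const :: "real \<Rightarrow> real \<Rightarrow> real" where
  "decay_conv_const \<mu> a =
     2 powr a * ((\<integral>x. (1 + \<bar>x\<bar>) powr (-a) \<partial>lborel) + (\<integral>x. (1 + \<bar>x\<bar>) powr (-\<mu>) \<partial>lborel))"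

lemma decay_conv_const_nonneg: "decay_conv_const \<mu> a \<ge> 0"
  unfolding decay_conv_const_def by (intro mult_nonneg_nonneg add_nonneg_nonneg integral_nonneg_AE) auto

lemma one_plus_abs_powr_conv_le:
  fixes m x \<mu> a :: real
  assumes "a > 0" "a \<le> \<mu>"
  shows "(1 + \<bar>m\<bar>) powr a * ((1 + \<bar>m - x\<bar>) powr (-\<mu>) * (1 + \<bar>x\<bar>) powr (-a))
     \<le> 2 powr a * ((1 + \<bar>x\<bar>) powr (-a) + (1 + \<bar>m - x\<bar>) powr (-\<mu>))"
proof -
  define A where "A = 1 + \<bar>m - x\<bar>"
  define B where "B = 1 + \<bar>x\<bar>"
  have A1: "A \<ge> 1" and B1: "B \<ge> 1" by (auto simp: A_def B_def)
  have "1 + \<bar>m\<bar> \<le> 2 * max A B" unfolding A_def B_def by (auto simp: max_def abs_if split: if_splits)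
  then have "(1 + \<bar>m\<bar>) powr a \<le> (2 * max A B) powr a" using assms by (intro powr_mono2) auto
  also have "\<dots> = 2 powr a * max A B powr a" using A1 B1 by (simp add: powr_mult)
  also have "max A B powr a \<le> A powr a + B powr a"
    by (cases "A \<le> B") (auto simp: max_def)
  finally have *: "(1 + \<bar>m\<bar>) powr a \<le> 2 powr a * (A powr a + B powr a)"
    by (simp add: mult_left_mono)
  have "(1 + \<bar>m\<bar>) powr a * (A powr (-\<mu>) * B powr (-a))
        \<le> 2 powr a * (A powr a + B powr a) * (A powr (-\<mu>) * B powr (-a))"
    using * by (rule mult_right_mono) simp
  also have "\<dots> = 2 powr a * ((A powr a * A powr (-\<mu>)) * B powr (-a) + A powr (-\<mu>) * (B powr a * B powr (-a)))"
    by algebra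
  also have "\<dots> = 2 powr a * (A powr (a - \<mu>) * B powr (-a) + A powr (-\<mu>))"
    using B1 by (simp add: powr_add[symmetric])
  also have "\<dots> \<le> 2 powr a * (B powr (-a) + A powr (-\<mu>))"
  proof -
    have "A powr (a - \<mu>) \<le> A powr 0" using A1 assms by (intro powr_mono) auto
    then have "A powr (a - \<mu>) \<le> 1" using A1 by simp
    then have "A powr (a - \<mu>) * B powr (-a) \<le> 1 * B powr (-a)" by (intro mult_right_mono) auto
    then show ?thesis by (intro mult_left_mono) auto
  qed
  finally show ?thesis unfolding A_def B_def .
qed

lemma
  fixes \<mu> a :: real
  assumes "1 < a" "a \<le> \<mu>"
  shows integrable_decay_conv:
      "integrable lborel (\<lambda>x. (1 + \<bar>m - x\<bar>) powr (-\<mu>) * (1 + \<bar>x\<bar>) powr (-a))"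
    and decay_conv_le:
      "(1 + \<bar>m\<bar>) powr a * (\<integral>x. (1 + \<bar>m - x\<bar>) powr (-\<mu>) * (1 + \<bar>x\<bar>) powr (-a) \<partial>lborel)
         \<le> decay_conv_const \<mu> a"
proof -
  have int_\<mu>: "integrable lborel (\<lambda>x::real. (1 + \<bar>m - x\<bar>) powr (-\<mu>))"
    using integrable_one_plus_abs_diff_powr assms by auto
  have int_a: "integrable lborel (\<lambda>x::real. (1 + \<bar>x\<bar>) powr (-a))"
    using integrable_one_plus_abs_powr assms by auto
  show int: "integrable lborel (\<lambda>x. (1 + \<bar>m - x\<bar>) powr (-\<mu>) * (1 + \<bar>x\<bar>) powr (-a))"
  proof (rule Bochner_Integration.integrable_bound[OF int_\<mu>])
    show "AE x in lborel. norm ((1 + \<bar>m - x\<bar>) powr (-\<mu>) * (1 + \<bar>x\<bar>) powr (-a))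
        \<le> norm ((1 + \<bar>m - x\<bar>) powr (-\<mu>))"
    proof (rule AE_I2)
      fix x :: real
      have "(1 + \<bar>x\<bar>) powr (-a) \<le> 1" using assms powr_mono2'[of "-a" 1 "1 + \<bar>x\<bar>"] by simp
      then show "norm ((1 + \<bar>m - x\<bar>) powr (-\<mu>) * (1 + \<bar>x\<bar>) powr (-a))
          \<le> norm ((1 + \<bar>m - x\<bar>) powr (-\<mu>))"
        by (simp add: mult_left_le)
    qed
  qed measurable
  have "(1 + \<bar>m\<bar>) powr a * (\<integral>x. (1 + \<bar>m - x\<bar>) powr (-\<mu>) * (1 + \<bar>x\<bar>) powr (-a) \<partial>lborel)
      = (\<integral>x. (1 + \<bar>m\<bar>) powr a * ((1 + \<bar>m - x\<bar>) powr (-\<mu>) * (1 + \<bar>x\<bar>) powr (-a)) \<partial>lborel)"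
    by simp
  also have "\<dots> \<le> (\<integral>x. 2 powr a * ((1 + \<bar>x\<bar>) powr (-a) + (1 + \<bar>m - x\<bar>) powr (-\<mu>)) \<partial>lborel)"
    using int int_\<mu> int_a assms by (intro integral_mono one_plus_abs_powr_conv_le) auto
  also have "\<dots> = decay_conv_const \<mu> a"
    using int_\<mu> int_a by (simp add: decay_conv_const_def integral_one_plus_abs_diff_powr)
  finally show "(1 + \<bar>m\<bar>) powr a * (\<integral>x. (1 + \<bar>m - x\<bar>) powr (-\<mu>) * (1 + \<bar>x\<bar>) powr (-a) \<partial>lborel)
         \<le> decay_conv_const \<mu> a" .
qed

definition E_weight :: "real \<Rightarrow> real \<Rightarrow> real \<Rightarrow> real" where
  "E_weight \<beta> \<mu> m = (1 + \<bar>m\<bar>) powr \<mu> * exp (\<beta> * \<bar>m\<bar>)"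

lemma E_weight_pos: "E_weight \<beta> \<mu> m > 0"
  by (simp add: E_weight_def)

lemma E_weight_split:
  "E_weight \<beta> \<mu> m = (1 + \<bar>m\<bar>) ^ n * ((1 + \<bar>m\<bar>) powr (\<mu> - n) * exp (\<beta> * \<bar>m\<bar>))"
  by (simp add: E_weight_def powr_realpow[symmetric] powr_add[symmetric])

lemma one_plus_abs_powr_le_E_weight: "\<beta> \<ge> 0 \<Longrightarrow> (1 + \<bar>m\<bar>) powr \<mu> \<le> E_weight \<beta> \<mu> m"
  by (simp add: E_weight_def mult_le_cancel_left1)

lemma convolution_integrand_le:
  fixes cv Fv Nc NF \<beta> \<mu> m x :: real and n :: nat
  assumes \<beta>: "\<beta> \<ge> 0" and cv: "cv \<ge> 0" "E_weight \<beta> \<mu> (m - x) * cv \<le> Nc"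
    and Fv: "Fv \<ge> 0" "E_weight \<beta> \<mu> x * Fv \<le> NF * (1 + \<bar>x\<bar>) ^ n"
  shows "cv * Fv \<le> Nc * NF / exp (\<beta> * \<bar>m\<bar>) * ((1 + \<bar>m - x\<bar>) powr (-\<mu>) * (1 + \<bar>x\<bar>) powr (-(\<mu> - n)))"
proof -
  define A where "A = 1 + \<bar>m - x\<bar>"
  define B where "B = 1 + \<bar>x\<bar>"
  define Ea where "Ea = exp (\<beta> * \<bar>m - x\<bar>)"
  define Eb where "Eb = exp (\<beta> * \<bar>x\<bar>)"
  have A0: "A > 0" and B0: "B > 0" and Ea0: "Ea > 0" and Eb0: "Eb > 0"
    by (auto simp: A_def B_def Ea_def Eb_def)
  have cv_le: "cv \<le> Nc / (A powr \<mu> * Ea)"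
    using cv(2) A0 Ea0 by (simp add: E_weight_def A_def Ea_def field_simps mult.commute)
  have Fv_le: "Fv \<le> NF * B ^ n / (B powr \<mu> * Eb)"
    using Fv(2) B0 Eb0 by (simp add: E_weight_def B_def Eb_def field_simps mult.commute)
  have Nc: "Nc \<ge> 0" using cv E_weight_pos[of \<beta> \<mu> "m - x"] by (smt (verit) mult_nonneg_nonneg)
  have "0 \<le> NF * B ^ n" using Fv E_weight_pos[of \<beta> \<mu> x] unfolding B_def
    by (smt (verit) mult_nonneg_nonneg)
  then have NF: "NF \<ge> 0" using B0 by (meson zero_le_mult_iff zero_less_power not_le)
  have "cv * Fv \<le> Nc / (A powr \<mu> * Ea) * (NF * B ^ n / (B powr \<mu> * Eb))"
    using cv_le Fv_le Fv(1) Nc A0 Ea0 by (intro mult_mono) auto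
  also have "\<dots> = Nc * NF * (A powr (-\<mu>) * (B ^ n / B powr \<mu>)) / (Ea * Eb)"
    using A0 B0 Ea0 Eb0 by (simp add: powr_minus field_simps)
  also have "B ^ n / B powr \<mu> = B powr (-(\<mu> - n))"
    using B0 by (simp add: powr_realpow[symmetric] powr_diff[symmetric] powr_minus_divide)
  also have "Nc * NF * (A powr (-\<mu>) * B powr (-(\<mu> - n))) / (Ea * Eb)
       \<le> Nc * NF * (A powr (-\<mu>) * B powr (-(\<mu> - n))) / exp (\<beta> * \<bar>m\<bar>)"
  proof (rule divide_left_mono)
    have "\<beta> * \<bar>m\<bar> \<le> \<beta> * \<bar>m - x\<bar> + \<beta> * \<bar>x\<bar>"
      using \<beta> abs_triangle_ineq[of "m - x" x] by (simp add: distrib_left[symmetric] mult_left_mono)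
    then show "exp (\<beta> * \<bar>m\<bar>) \<le> Ea * Eb" by (simp add: Ea_def Eb_def exp_add[symmetric])
  qed (use Nc NF Ea0 Eb0 in auto)
  finally show ?thesis by (simp add: A_def B_def)
qed

lemma weighted_convolution_le:
  fixes c F :: "real \<Rightarrow> complex" and n :: nat
  assumes \<beta>: "\<beta> \<ge> 0" and \<mu>: "real n + 1 < \<mu>"
    and c_cont: "continuous_on UNIV c" and c_le: "\<And>y. E_weight \<beta> \<mu> y * cmod (c y) \<le> Nc"
    and F_meas: "F \<in> borel_measurable lborel"
    and F_le: "\<And>x. E_weight \<beta> \<mu> x * cmod (F x) \<le> NF * (1 + \<bar>x\<bar>) ^ n"
  shows "(1 + \<bar>m\<bar>) powr (\<mu> - n) * exp (\<beta> * \<bar>m\<bar>) * cmod (LINT x|lborel. c (m - x) * F x)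
    \<le> decay_conv_const \<mu> (\<mu> - n) * Nc * NF"
proof -
  define P where "P x = (1 + \<bar>m - x\<bar>) powr (-\<mu>) * (1 + \<bar>x\<bar>) powr (-(\<mu> - n))" for x
  define K where "K = Nc * NF / exp (\<beta> * \<bar>m\<bar>)"
  have P_int: "integrable lborel P"
    unfolding P_def by (rule integrable_decay_conv) (use \<mu> in auto)
  have P_le: "(1 + \<bar>m\<bar>) powr (\<mu> - n) * integral\<^sup>L lborel P \<le> decay_conv_const \<mu> (\<mu> - n)"
    unfolding P_def by (rule decay_conv_le) (use \<mu> in auto)
  have pointwise: "cmod (c (m - x) * F x) \<le> K * P x" for x
    unfolding norm_mult K_def P_def using \<beta> c_le F_le by (intro convolution_integrand_le) auto
  have "continuous_on UNIV (\<lambda>x. c (m - x))"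
    by (intro continuous_on_compose2[OF c_cont]) (auto intro!: continuous_intros)
  then have "(\<lambda>x. c (m - x)) \<in> borel_measurable lborel"
    by (simp add: borel_measurable_continuous_onI)
  then have meas: "(\<lambda>x. c (m - x) * F x) \<in> borel_measurable lborel" using F_meas by measurable
  have int: "integrable lborel (\<lambda>x. c (m - x) * F x)"
    using meas pointwise by (rule integrable_bounded_by[rotated]) (use P_int in simp)
  have "E_weight \<beta> \<mu> 0 * cmod (c 0) \<le> Nc" "E_weight \<beta> \<mu> 0 * cmod (F 0) \<le> NF"
    using c_le[of 0] F_le[of 0] by simp_all
  then have NcNF: "0 \<le> Nc * NF"
    using E_weight_pos[of \<beta> \<mu> 0] by (meson less_imp_le mult_nonneg_nonneg norm_ge_zero order_trans)
  have "cmod (LINT x|lborel. c (m - x) * F x) \<le> (LINT x|lborel. K * P x)"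
    by (intro Bochner_Integration.integral_norm_bound_integral) (use int P_int pointwise in auto)
  then have "(1 + \<bar>m\<bar>) powr (\<mu> - n) * exp (\<beta> * \<bar>m\<bar>) * cmod (LINT x|lborel. c (m - x) * F x)
      \<le> (1 + \<bar>m\<bar>) powr (\<mu> - n) * exp (\<beta> * \<bar>m\<bar>) * (K * integral\<^sup>L lborel P)"
    by (intro mult_left_mono) auto
  also have "\<dots> = Nc * NF * ((1 + \<bar>m\<bar>) powr (\<mu> - n) * integral\<^sup>L lborel P)"
    by (simp add: K_def)
  also have "\<dots> \<le> Nc * NF * decay_conv_const \<mu> (\<mu> - n)"
    using P_le NcNF by (rule mult_left_mono)
  finally show ?thesis by (simp add: mult_ac)
qed

section \<open>The Gaussian weight in the variable \<tau>\<close>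

lemma abs_ln_diff_le:
  fixes v w e :: real
  assumes "w > 0" "\<bar>v - w\<bar> \<le> e" "2 * e \<le> w"
  shows "\<bar>ln v - ln w\<bar> \<le> 2 * e / w"
proof -
  define y where "y = (v - w) / w"
  have y: "\<bar>y\<bar> \<le> e / w" using assms by (simp add: y_def abs_divide divide_right_mono)
  have "e / w \<le> 1/2" using assms by (simp add: divide_le_eq)
  then have y2: "\<bar>y\<bar> \<le> 1/2" using y by linarith
  have v: "v = w * (1 + y)" using assms(1) by (simp add: y_def field_simps)
  have "1 + y > 0" using y2 by auto
  then have "ln v - ln w = ln (1 + y)" using v assms(1) by (simp add: ln_mult)
  moreover have "\<bar>ln (1 + y) - y\<bar> \<le> 2 * y\<^sup>2" using y2 by (rule abs_ln_one_plus_x_minus_x_bound)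
  moreover have "2 * y\<^sup>2 \<le> \<bar>y\<bar>"
  proof -
    have "2 * y\<^sup>2 = (2 * \<bar>y\<bar>) * \<bar>y\<bar>" by (simp add: power2_eq_square)
    also have "\<dots> \<le> 1 * \<bar>y\<bar>" using y2 by (intro mult_right_mono) auto
    finally show ?thesis by simp
  qed
  ultimately have "\<bar>ln v - ln w\<bar> \<le> 2 * \<bar>y\<bar>" by linarith
  also have "\<dots> \<le> 2 * e / w" using y by simp
  finally show ?thesis .
qed

lemma log_gaussian_shift_le_bounded:
  fixes hh A D T e \<alpha> u v :: real
  assumes "A \<ge> 0" "hh \<ge> 0" "e \<ge> 0" "D > 0" "D \<le> u" "u \<le> T" "D \<le> v" "v \<le> T"
  shows "hh * ln (u + e) - A * ((ln u)\<^sup>2 - (ln v)\<^sup>2) - \<alpha> * (ln u - ln v)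
    \<le> hh * ln (T + e) + A * (\<bar>ln D\<bar> + \<bar>ln T\<bar>)\<^sup>2 + 2 * \<bar>\<alpha>\<bar> * (\<bar>ln D\<bar> + \<bar>ln T\<bar>)"
proof -
  define M where "M = \<bar>ln D\<bar> + \<bar>ln T\<bar>"
  have ln_le: "\<bar>ln x\<bar> \<le> M" if "D \<le> x" "x \<le> T" for x
  proof -
    have "ln D \<le> ln x" "ln x \<le> ln T" using that assms(4) by auto
    then show ?thesis unfolding M_def by linarith
  qed
  have lu: "\<bar>ln u\<bar> \<le> M" and lv: "\<bar>ln v\<bar> \<le> M" using ln_le assms by auto
  have t1: "hh * ln (u + e) \<le> hh * ln (T + e)" using assms by (intro mult_left_mono) auto
  have "(ln v)\<^sup>2 \<le> M\<^sup>2" using lv by (metis abs_le_square_iff abs_of_nonneg abs_ge_zero order_trans power2_abs)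
  then have t2: "- A * ((ln u)\<^sup>2 - (ln v)\<^sup>2) \<le> A * M\<^sup>2"
    using assms(1) mult_left_mono[of "(ln v)\<^sup>2" "M\<^sup>2" A] zero_le_power2[of "ln u"]
    by (simp add: algebra_simps add_increasing2)
  have "- \<alpha> * (ln u - ln v) \<le> \<bar>\<alpha>\<bar> * \<bar>ln u - ln v\<bar>" by (simp add: abs_mult[symmetric])
  also have "\<dots> \<le> \<bar>\<alpha>\<bar> * (2 * M)" using lu lv by (intro mult_left_mono) auto
  finally show ?thesis using t1 t2 unfolding M_def by linarith
qed

text \<open>For large \<open>u\<close> one has \<open>ln v = ln u - ld + O(1/u)\<close>, so the Gaussian difference
  \<open>(ln u)\<^sup>2 - (ln v)\<^sup>2\<close> grows like \<open>2 ld ln u\<close>, which dominates \<open>hh ln u\<close>.\<close>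

lemma log_gaussian_shift_le_large:
  fixes hh A ld e \<alpha> u v :: real
  assumes A: "A > 0" and ld: "ld \<ge> 0" and hA: "hh \<le> 2 * A * ld" and hh: "hh \<ge> 0"
    and e: "e \<ge> 0" and u1: "u \<ge> 1" and ue: "u \<ge> e"
    and us: "2 * e \<le> exp (-ld) * u" and uv: "\<bar>v - exp (-ld) * u\<bar> \<le> e"
  shows "hh * ln (u + e) - A * ((ln u)\<^sup>2 - (ln v)\<^sup>2) - \<alpha> * (ln u - ln v)
    \<le> hh * ln 2 + A * (ld\<^sup>2 + 2 * ld + 4 * e / exp (-ld) + 1) + \<bar>\<alpha>\<bar> * (ld + 1)"
proof -
  define s where "s = exp (-ld)"
  have u0: "u > 0" using u1 by simp
  have su0: "s * u > 0" using u0 by (simp add: s_def)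
  define \<epsilon> where "\<epsilon> = ln v - ln (s * u)"
  have eps: "\<bar>\<epsilon>\<bar> \<le> 2 * e / (s * u)"
    unfolding \<epsilon>_def using su0 uv us by (intro abs_ln_diff_le) (auto simp: s_def)
  have "2 * e / (s * u) \<le> 1" using us su0 by (simp add: divide_le_eq s_def)
  then have eps1: "\<bar>\<epsilon>\<bar> \<le> 1" using eps by linarith
  have lv: "ln v = ln u - ld + \<epsilon>" using u0 by (simp add: \<epsilon>_def ln_mult s_def)
  have lu0: "ln u \<ge> 0" using u1 by simp
  have "\<bar>\<epsilon>\<bar> * ln u \<le> 2 * e / (s * u) * u"
    using eps lu0 ln_le_minus_one[of u] u0 by (meson abs_ge_zero mult_mono order_trans ln_bound)
  also have "\<dots> = 2 * e / s" using u0 by simp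
  finally have epsln: "\<epsilon> * ln u \<le> 2 * e / s"
    using lu0 by (meson abs_ge_self mult_right_mono order_trans)
  have diff: "(ln u)\<^sup>2 - (ln v)\<^sup>2 = 2 * ld * ln u - ld\<^sup>2 + 2 * ld * \<epsilon> - 2 * \<epsilon> * ln u - \<epsilon>\<^sup>2"
    unfolding lv by (simp add: power2_eq_square algebra_simps)
  have "ld * (-1) \<le> ld * \<epsilon>" using eps1 ld by (intro mult_left_mono) (auto simp: abs_le_iff)
  moreover have "\<epsilon>\<^sup>2 \<le> 1" using eps1 by (simp add: abs_square_le_1)
  ultimately have dlow: "(ln u)\<^sup>2 - (ln v)\<^sup>2 \<ge> 2 * ld * ln u - (ld\<^sup>2 + 2 * ld + 4 * e / s + 1)"
    unfolding diff using epsln by linarith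
  have t1: "hh * ln (u + e) \<le> hh * ln 2 + hh * ln u"
  proof -
    have "ln (u + e) \<le> ln (2 * u)" using ue e u0 by auto
    also have "\<dots> = ln 2 + ln u" using u0 by (simp add: ln_mult)
    finally show ?thesis using hh by (metis distrib_left mult_left_mono)
  qed
  have t2: "- A * ((ln u)\<^sup>2 - (ln v)\<^sup>2) \<le> - hh * ln u + A * (ld\<^sup>2 + 2 * ld + 4 * e / s + 1)"
  proof -
    have "- A * ((ln u)\<^sup>2 - (ln v)\<^sup>2) \<le> - A * (2 * ld * ln u - (ld\<^sup>2 + 2 * ld + 4 * e / s + 1))"
      using dlow A by (simp add: mult_left_mono)
    also have "\<dots> = - (2 * A * ld) * ln u + A * (ld\<^sup>2 + 2 * ld + 4 * e / s + 1)" by (simp add: algebra_simps)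
    also have "\<dots> \<le> - hh * ln u + A * (ld\<^sup>2 + 2 * ld + 4 * e / s + 1)" using hA lu0 by (simp add: mult_right_mono)
    finally show ?thesis .
  qed
  have "\<bar>ln u - ln v\<bar> \<le> ld + 1" using lv eps1 ld by auto
  then have "\<bar>\<alpha>\<bar> * \<bar>ln u - ln v\<bar> \<le> \<bar>\<alpha>\<bar> * (ld + 1)" by (intro mult_left_mono) auto
  moreover have "- \<alpha> * (ln u - ln v) \<le> \<bar>\<alpha>\<bar> * \<bar>ln u - ln v\<bar>" by (simp add: abs_mult[symmetric])
  ultimately have t3: "- \<alpha> * (ln u - ln v) \<le> \<bar>\<alpha>\<bar> * (ld + 1)" by linarith
  show ?thesis using t1 t2 t3 unfolding s_def by linarith
qed

lemma log_gaussian_shift_bounded: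
  fixes hh A ld e D \<alpha> :: real
  assumes "A > 0" "ld \<ge> 0" "hh \<le> 2 * A * ld" "hh \<ge> 0" "D > 0" "e \<ge> 0"
  shows "\<exists>K. \<forall>u v. u \<ge> D \<longrightarrow> v \<ge> D \<longrightarrow> \<bar>v - exp (-ld) * u\<bar> \<le> e \<longrightarrow>
     hh * ln (u + e) - A * ((ln u)\<^sup>2 - (ln v)\<^sup>2) - \<alpha> * (ln u - ln v) \<le> K"
proof -
  define s where "s = exp (-ld)"
  have s0: "s > 0" and s1: "s \<le> 1" using assms(2) by (auto simp: s_def)
  define U0 where "U0 = max 1 (max e (2 * e / s))"
  define T where "T = U0 + e"
  define K1 where "K1 = hh * ln (T + e) + A * (\<bar>ln D\<bar> + \<bar>ln T\<bar>)\<^sup>2 + 2 * \<bar>\<alpha>\<bar> * (\<bar>ln D\<bar> + \<bar>ln T\<bar>)"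
  define K2 where "K2 = hh * ln 2 + A * (ld\<^sup>2 + 2 * ld + 4 * e / s + 1) + \<bar>\<alpha>\<bar> * (ld + 1)"
  have "hh * ln (u + e) - A * ((ln u)\<^sup>2 - (ln v)\<^sup>2) - \<alpha> * (ln u - ln v) \<le> max K1 K2"
    if u: "u \<ge> D" and v: "v \<ge> D" and uv: "\<bar>v - s * u\<bar> \<le> e" for u v
  proof (cases "u \<le> U0")
    case True
    have "s * u \<le> u" using s0 s1 u assms(5) by (intro mult_left_le_one_le) auto
    then have "v \<le> T" using uv True by (auto simp: T_def abs_le_iff)
    moreover have "u \<le> T" using True assms(6) by (simp add: T_def)
    ultimately have "hh * ln (u + e) - A * ((ln u)\<^sup>2 - (ln v)\<^sup>2) - \<alpha> * (ln u - ln v) \<le> K1"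
      unfolding K1_def using log_gaussian_shift_le_bounded[of A hh e D u T v \<alpha>] assms u v by auto
    then show ?thesis by (rule max.coboundedI1)
  next
    case False
    have "2 * e / s \<le> U0" by (simp add: U0_def)
    then have "2 * e \<le> U0 * s" using s0 by (simp add: pos_divide_le_eq)
    also have "\<dots> \<le> s * u" using False s0 by (simp add: mult.commute)
    finally have "2 * e \<le> s * u" .
    moreover have "u \<ge> 1" "u \<ge> e" using False by (auto simp: U0_def)
    ultimately have "hh * ln (u + e) - A * ((ln u)\<^sup>2 - (ln v)\<^sup>2) - \<alpha> * (ln u - ln v) \<le> K2"
      unfolding K2_def s_def using log_gaussian_shift_le_large[of A ld hh e u v \<alpha>] assms uv
      by (simp add: s_def)
    then show ?thesis by (rule max.coboundedI2)
  qed
  then show ?thesis unfolding s_def by blast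
qed

definition tau_weight :: "real \<Rightarrow> real \<Rightarrow> real \<Rightarrow> real \<Rightarrow> complex \<Rightarrow> real" where
  "tau_weight q \<delta> \<kappa> \<alpha> \<tau> = exp (- (\<kappa> / 2) * (ln (cmod (\<tau> + complex_of_real \<delta>)))\<^sup>2 / ln q
          - \<alpha> * ln (cmod (\<tau> + complex_of_real \<delta>)))"

lemma exp_weight_eq:
  "exp_weight q \<delta> \<kappa> \<beta> \<mu> \<alpha> \<tau> m = E_weight \<beta> \<mu> m * tau_weight q \<delta> \<kappa> \<alpha> \<tau>"
  by (simp add: exp_weight_def tau_weight_def E_weight_def)

lemma tau_weight_pos: "tau_weight q \<delta> \<kappa> \<alpha> \<tau> > 0"
  by (simp add: tau_weight_def)

lemma norm_dilation_shift_le: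
  assumes "0 < s" "s \<le> 1"
  shows "\<bar>cmod (complex_of_real s * \<tau> + complex_of_real \<delta>) - s * cmod (\<tau> + complex_of_real \<delta>)\<bar> \<le> \<bar>\<delta>\<bar>"
proof -
  have "s * cmod (\<tau> + complex_of_real \<delta>) = cmod (complex_of_real s * (\<tau> + complex_of_real \<delta>))"
    using assms by (simp add: norm_mult)
  then have "\<bar>cmod (complex_of_real s * \<tau> + complex_of_real \<delta>) - s * cmod (\<tau> + complex_of_real \<delta>)\<bar>
      \<le> cmod ((complex_of_real s * \<tau> + complex_of_real \<delta>) - complex_of_real s * (\<tau> + complex_of_real \<delta>))"
    by (simp add: norm_triangle_ineq3)
  also have "(complex_of_real s * \<tau> + complex_of_real \<delta>) - complex_of_real s * (\<tau> + complex_of_real \<delta>)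
      = complex_of_real ((1 - s) * \<delta>)"
    by (simp add: algebra_simps)
  also have "cmod (complex_of_real ((1 - s) * \<delta>)) = \<bar>(1 - s) * \<delta>\<bar>" by (rule norm_of_real)
  also have "\<dots> \<le> \<bar>\<delta>\<bar>" using assms by (simp add: abs_mult mult_left_le_one_le)
  finally show ?thesis .
qed

lemma norm_q_conv_coeff_le:
  assumes "q > 1" "k > 0"
  shows "cmod (\<tau> ^ h / complex_of_real ((q powr (1 / real k)) powr (real h * (real h - 1) / 2)))
    \<le> (cmod (\<tau> + complex_of_real \<delta>) + \<bar>\<delta>\<bar>) ^ h"
proof -
  define c where "c = (q powr (1 / real k)) powr (real h * (real h - 1) / 2)"
  have "q powr (1 / real k) \<ge> 1" using assms by (simp add: ge_one_powr_ge_zero)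
  moreover have "real h * (real h - 1) / 2 \<ge> 0" by (cases h) auto
  ultimately have c1: "c \<ge> 1" unfolding c_def by (simp add: ge_one_powr_ge_zero)
  have "cmod (\<tau> ^ h / complex_of_real c) = cmod \<tau> ^ h / c" using c1 by (simp add: norm_divide norm_power)
  also have "\<dots> \<le> cmod \<tau> ^ h" using c1 by (simp add: divide_le_eq mult_le_cancel_left1 order_trans[OF _ mult_right_mono])
  also have "\<dots> \<le> (cmod (\<tau> + complex_of_real \<delta>) + \<bar>\<delta>\<bar>) ^ h"
  proof (rule power_mono)
    have "cmod \<tau> \<le> cmod (\<tau> + complex_of_real \<delta>) + cmod (complex_of_real \<delta>)"
      by (metis add_diff_cancel_right' norm_triangle_ineq4)
    then show "cmod \<tau> \<le> cmod (\<tau> + complex_of_real \<delta>) + \<bar>\<delta>\<bar>" by simp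
  qed simp
  finally show ?thesis unfolding c_def .
qed

text \<open>With \<open>u = \<bar>\<tau> + \<delta>\<bar>\<close> and \<open>v = \<bar>q\<^bsup>-h/k\<^esup>\<tau> + \<delta>\<bar>\<close> one has \<open>v \<approx> q\<^bsup>-h/k\<^esup> u\<close>, and the
  claim becomes the bound of \<open>log_gaussian_shift_bounded\<close>; \<open>k \<le> \<kappa>\<close> is exactly the condition
  \<open>hh \<le> 2 A ld\<close> there.\<close>

lemma tau_weight_q_dilation_le:
  fixes q \<kappa> \<alpha> \<delta> Dd :: real and k h :: nat and S :: "complex set"
  assumes q: "q > 1" and k: "k > 0" and \<kappa>: "real k \<le> \<kappa>" and Dd: "Dd > 0"
    and S_dist: "\<And>\<tau>. \<tau> \<in> S \<Longrightarrow> Dd \<le> cmod (\<tau> + complex_of_real \<delta>)"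
    and S_scale: "\<And>\<tau> s. \<tau> \<in> S \<Longrightarrow> 0 < s \<Longrightarrow> s \<le> 1 \<Longrightarrow> complex_of_real s * \<tau> \<in> S"
  shows "\<exists>K>0. \<forall>\<tau>\<in>S. cmod (\<tau> ^ h / complex_of_real ((q powr (1 / real k)) powr (real h * (real h - 1) / 2)))
            * tau_weight q \<delta> \<kappa> \<alpha> \<tau> \<le> K * tau_weight q \<delta> \<kappa> \<alpha> (complex_of_real (q powr (- real h / real k)) * \<tau>)"
proof -
  define A where "A = \<kappa> / (2 * ln q)"
  define ld where "ld = real h * ln q / real k"
  define s where "s = q powr (- real h / real k)"
  have lq: "ln q > 0" and kpos: "real k > 0" using q k by auto
  have A0: "A > 0" using lq \<kappa> kpos unfolding A_def by simp
  have ld0: "ld \<ge> 0" using lq kpos by (simp add: ld_def)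
  have "\<kappa> / real k \<ge> 1" using \<kappa> kpos by simp
  then have "real h \<le> \<kappa> / real k * real h" using mult_right_mono[of 1 "\<kappa> / real k" "real h"] by simp
  also have "\<dots> = 2 * A * ld" using lq kpos by (simp add: A_def ld_def field_simps)
  finally have hA: "real h \<le> 2 * A * ld" .
  obtain K0 where K0: "\<And>u v. u \<ge> Dd \<Longrightarrow> v \<ge> Dd \<Longrightarrow> \<bar>v - exp (-ld) * u\<bar> \<le> \<bar>\<delta>\<bar> \<Longrightarrow>
     real h * ln (u + \<bar>\<delta>\<bar>) - A * ((ln u)\<^sup>2 - (ln v)\<^sup>2) - \<alpha> * (ln u - ln v) \<le> K0"
    using log_gaussian_shift_bounded[OF A0 ld0 hA _ Dd, of "\<bar>\<delta>\<bar>" \<alpha>] by auto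
  have s_exp: "s = exp (-ld)" unfolding s_def ld_def using q by (simp add: powr_def)
  have s0: "s > 0" and s1: "s \<le> 1" using ld0 by (auto simp: s_exp)
  have wt: "tau_weight q \<delta> \<kappa> \<alpha> z = exp (- A * (ln (cmod (z + complex_of_real \<delta>)))\<^sup>2 - \<alpha> * ln (cmod (z + complex_of_real \<delta>)))" for z
    unfolding tau_weight_def A_def using lq by (simp add: field_simps)
  have "cmod (\<tau> ^ h / complex_of_real ((q powr (1 / real k)) powr (real h * (real h - 1) / 2)))
            * tau_weight q \<delta> \<kappa> \<alpha> \<tau> \<le> exp K0 * tau_weight q \<delta> \<kappa> \<alpha> (complex_of_real s * \<tau>)" if \<tau>: "\<tau> \<in> S" for \<tau>
  proof -
    define u where "u = cmod (\<tau> + complex_of_real \<delta>)"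
    define v where "v = cmod (complex_of_real s * \<tau> + complex_of_real \<delta>)"
    have uD: "u \<ge> Dd" using S_dist[OF \<tau>] by (simp add: u_def)
    have vD: "v \<ge> Dd" using S_dist[OF S_scale[OF \<tau> s0 s1]] by (simp add: v_def)
    have uv: "\<bar>v - exp (-ld) * u\<bar> \<le> \<bar>\<delta>\<bar>"
      using norm_dilation_shift_le[OF s0 s1] by (simp add: u_def v_def s_exp)
    have "(u + \<bar>\<delta>\<bar>) ^ h = exp (real h * ln (u + \<bar>\<delta>\<bar>))" using uD Dd by (simp add: exp_of_nat_mult)
    then have coeff: "cmod (\<tau> ^ h / complex_of_real ((q powr (1 / real k)) powr (real h * (real h - 1) / 2)))
        \<le> exp (real h * ln (u + \<bar>\<delta>\<bar>))"
      using norm_q_conv_coeff_le[OF q k, of \<tau> h \<delta>] by (simp add: u_def)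
    have wt_\<tau>: "tau_weight q \<delta> \<kappa> \<alpha> \<tau> = exp (- A * (ln u)\<^sup>2 - \<alpha> * ln u)" using wt[of \<tau>] by (simp add: u_def)
    have "cmod (\<tau> ^ h / complex_of_real ((q powr (1 / real k)) powr (real h * (real h - 1) / 2)))
            * tau_weight q \<delta> \<kappa> \<alpha> \<tau> \<le> exp (real h * ln (u + \<bar>\<delta>\<bar>)) * exp (- A * (ln u)\<^sup>2 - \<alpha> * ln u)"
      unfolding wt_\<tau> using coeff by (intro mult_right_mono) auto
    also have "\<dots> = exp (real h * ln (u + \<bar>\<delta>\<bar>) - A * (ln u)\<^sup>2 - \<alpha> * ln u)" by (simp add: exp_add[symmetric])
    also have "\<dots> \<le> exp (K0 - A * (ln v)\<^sup>2 - \<alpha> * ln v)" using K0[OF uD vD uv] by (simp add: algebra_simps)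
    also have "\<dots> = exp K0 * exp (- A * (ln v)\<^sup>2 - \<alpha> * ln v)" by (simp add: exp_add[symmetric])
    also have "\<dots> = exp K0 * tau_weight q \<delta> \<kappa> \<alpha> (complex_of_real s * \<tau>)"
      using wt[of "complex_of_real s * \<tau>"] by (simp add: v_def)
    finally show ?thesis .
  qed
  then show ?thesis unfolding s_def using exp_gt_zero by blast
qed

lemma sector_add_of_real_nonzero:
  assumes "\<rho> > 0" "infdist (- complex_of_real \<delta>) (sector d a \<union> ball 0 \<rho>) > 0"
    and "\<tau> \<in> sector d a \<union> cball 0 \<rho>"
  shows "\<tau> + complex_of_real \<delta> \<noteq> 0"
  using infdist_sector_Un_ball_le[OF assms(1,3), of \<delta>] assms(2) by auto

lemma sector_tau_weight_q_dilation_le: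
  fixes k :: nat
  assumes "q > 1" "k > 0" "real k \<le> \<kappa>" "\<rho> > 0"
    and "infdist (- complex_of_real \<delta>) (sector d a \<union> ball 0 \<rho>) > 0"
  shows "\<exists>K. \<forall>h. K h > 0 \<and> (\<forall>\<tau>\<in>sector d a \<union> cball 0 \<rho>.
      cmod (\<tau> ^ h / complex_of_real ((q powr (1 / real k)) powr (real h * (real h - 1) / 2)))
        * tau_weight q \<delta> \<kappa> \<alpha> \<tau> \<le> K h * tau_weight q \<delta> \<kappa> \<alpha> (complex_of_real (q powr (- real h / real k)) * \<tau>))"
proof -
  let ?S = "sector d a \<union> cball 0 \<rho>"
  have "\<exists>K>0. \<forall>\<tau>\<in>?S.
      cmod (\<tau> ^ h / complex_of_real ((q powr (1 / real k)) powr (real h * (real h - 1) / 2)))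
        * tau_weight q \<delta> \<kappa> \<alpha> \<tau> \<le> K * tau_weight q \<delta> \<kappa> \<alpha> (complex_of_real (q powr (- real h / real k)) * \<tau>)"
    for h
  proof (rule tau_weight_q_dilation_le[OF assms(1-3,5)])
    show "infdist (- complex_of_real \<delta>) (sector d a \<union> ball 0 \<rho>) \<le> cmod (\<tau> + complex_of_real \<delta>)"
      if "\<tau> \<in> ?S" for \<tau>
      using assms(4) that by (rule infdist_sector_Un_ball_le)
    show "complex_of_real s * \<tau> \<in> ?S" if "\<tau> \<in> ?S" "0 < s" "s \<le> 1" for \<tau> s
      using of_real_mult_mem_sector that by (rule of_real_mult_mem_Un_cball)
  qed
  then show ?thesis by metis
qed

section \<open>Integrals depending on a parameter\<close>

lemma continuous_on_Times_UNIV_slice: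
  assumes "continuous_on (S \<times> UNIV) (\<lambda>p. F (fst p) (snd p))" "\<tau> \<in> S"
  shows "continuous_on UNIV (F \<tau>)"
proof -
  have "continuous_on UNIV ((\<lambda>p. F (fst p) (snd p)) \<circ> Pair \<tau>)"
    using assms by (intro continuous_on_compose continuous_intros continuous_on_subset[OF assms(1)]) auto
  then show ?thesis by (simp add: o_def)
qed

lemma borel_measurable_shift_mult:
  fixes c G :: "real \<Rightarrow> 'b::{real_normed_algebra,second_countable_topology}"
  assumes "continuous_on UNIV c" "continuous_on UNIV G"
  shows "(\<lambda>x. c (m - x) * G x) \<in> borel_measurable lborel"
proof -
  have "continuous_on UNIV (\<lambda>x. c (m - x) * G x)"
    using assms by (intro continuous_intros continuous_on_compose2[OF assms(1)]) auto
  then show ?thesis by (simp add: borel_measurable_continuous_onI)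
qed

lemma tendsto_integral_dominated:
  fixes H :: "'c::first_countable_topology \<Rightarrow> 'a \<Rightarrow> 'b::{banach,second_countable_topology}"
  assumes meas: "\<forall>\<^sub>F z in at z0 within S. H z \<in> borel_measurable M"
    and H0: "H0 \<in> borel_measurable M" and w: "integrable M w"
    and lim: "\<And>x. x \<in> space M \<Longrightarrow> ((\<lambda>z. H z x) \<longlongrightarrow> H0 x) (at z0 within S)"
    and bound: "\<forall>\<^sub>F z in at z0 within S. \<forall>x\<in>space M. norm (H z x) \<le> w x"
  shows "((\<lambda>z. integral\<^sup>L M (H z)) \<longlongrightarrow> integral\<^sup>L M H0) (at z0 within S)"
proof (subst tendsto_at_iff_sequentially, intro allI impI)
  fix X :: "nat \<Rightarrow> 'c" assume "\<forall>i. X i \<in> S - {z0}" "X \<longlonglongrightarrow> z0"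
  then have X: "filterlim X (at z0 within S) sequentially" by (auto simp: filterlim_at)
  from filterlim_iff[THEN iffD1, OF X, rule_format, OF eventually_conj[OF meas bound]]
  obtain N where N: "\<And>n. N \<le> n \<Longrightarrow> H (X n) \<in> borel_measurable M \<and> (\<forall>x\<in>space M. norm (H (X n) x) \<le> w x)"
    by (auto simp: eventually_sequentially)
  have "(\<lambda>n. integral\<^sup>L M (H (X n))) \<longlonglongrightarrow> integral\<^sup>L M H0"
  proof (rule LIMSEQ_offset, rule integral_dominated_convergence[where w=w])
    show "AE x in M. (\<lambda>n. H (X (n + N)) x) \<longlonglongrightarrow> H0 x"
      using lim by (intro AE_I2 LIMSEQ_ignore_initial_segment filterlim_compose[OF _ X])
  qed (use N H0 w in auto)
  then show "((\<lambda>z. integral\<^sup>L M (H z)) \<circ> X) \<longlonglongrightarrow> integral\<^sup>L M H0" by (simp add: o_def)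
qed

lemma borel_measurable_field_derivative:
  fixes F :: "'b::{real_normed_field,second_countable_topology} \<Rightarrow> 'a \<Rightarrow> 'b"
  assumes meas: "\<forall>\<^sub>F z in at z0. F z \<in> borel_measurable M" and F0: "F z0 \<in> borel_measurable M"
    and deriv: "\<And>x. x \<in> space M \<Longrightarrow> ((\<lambda>z. F z x) has_field_derivative F' x) (at z0)"
  shows "F' \<in> borel_measurable M"
proof -
  define X where "X = (\<lambda>n. z0 + of_real (inverse (real (Suc n))))"
  have "(\<lambda>n. of_real (inverse (real (Suc n))) :: 'b) \<longlonglongrightarrow> of_real 0"
    by (rule tendsto_of_real[OF LIMSEQ_inverse_real_of_nat])
  then have "X \<longlonglongrightarrow> z0 + of_real 0"
    unfolding X_def by (rule tendsto_add[OF tendsto_const])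
  then have "X \<longlonglongrightarrow> z0" by simp
  moreover have "X n \<noteq> z0" for n
  proof -
    have "of_real (inverse (real (Suc n))) \<noteq> (0::'b)" by (simp only: of_real_eq_0_iff) simp
    then show ?thesis by (metis X_def add_cancel_right_right)
  qed
  ultimately have X: "filterlim X (at z0) sequentially"
    by (auto simp: filterlim_at)
  from filterlim_iff[THEN iffD1, OF X, rule_format, OF meas]
  obtain N where N: "\<And>n. N \<le> n \<Longrightarrow> F (X n) \<in> borel_measurable M"
    by (auto simp: eventually_sequentially)
  show ?thesis
  proof (rule borel_measurable_LIMSEQ_metric[where f="\<lambda>n x. (F (X (n + N)) x - F z0 x) / (X (n + N) - z0)"])
    show "(\<lambda>x. (F (X (n + N)) x - F z0 x) / (X (n + N) - z0)) \<in> borel_measurable M" for n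
      using N[of "n + N"] F0 by (intro borel_measurable_divide borel_measurable_diff) auto
    show "(\<lambda>n. (F (X (n + N)) x - F z0 x) / (X (n + N) - z0)) \<longlonglongrightarrow> F' x" if "x \<in> space M" for x
      using deriv[OF that] unfolding has_field_derivative_iff
      by (intro LIMSEQ_ignore_initial_segment filterlim_compose[OF _ X])
  qed
qed

lemma has_field_derivative_integral_dominated:
  fixes H :: "'b::{real_normed_field,banach,second_countable_topology} \<Rightarrow> 'a \<Rightarrow> 'b"
  assumes int: "\<forall>\<^sub>F z in at z0. integrable M (H z)" and int0: "integrable M (H z0)"
    and deriv: "\<And>x. x \<in> space M \<Longrightarrow> ((\<lambda>z. H z x) has_field_derivative H' x) (at z0)"
    and lip: "\<forall>\<^sub>F z in at z0. \<forall>x\<in>space M. norm (H z x - H z0 x) \<le> D x * norm (z - z0)"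
    and D: "integrable M D"
  shows "((\<lambda>z. integral\<^sup>L M (H z)) has_field_derivative integral\<^sup>L M H') (at z0)"
  unfolding has_field_derivative_iff
proof (rule Lim_transform_eventually)
  have meas: "\<forall>\<^sub>F z in at z0. H z \<in> borel_measurable M" using int by eventually_elim auto
  show "((\<lambda>z. LINT x|M. (H z x - H z0 x) / (z - z0)) \<longlongrightarrow> integral\<^sup>L M H') (at z0)"
  proof (rule tendsto_integral_dominated[where w=D])
    show "\<forall>\<^sub>F z in at z0. (\<lambda>x. (H z x - H z0 x) / (z - z0)) \<in> borel_measurable M"
      using meas
    proof eventually_elim
      case (elim z)
      then show ?case using borel_measurable_integrable[OF int0] by measurable
    qed
    show "H' \<in> borel_measurable M"
      using meas borel_measurable_integrable[OF int0] deriv by (rule borel_measurable_field_derivative)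
    show "((\<lambda>z. (H z x - H z0 x) / (z - z0)) \<longlongrightarrow> H' x) (at z0)" if "x \<in> space M" for x
      using deriv[OF that] by (simp add: has_field_derivative_iff)
    have "\<forall>\<^sub>F z in at z0. z \<noteq> z0" by (auto simp: eventually_at_filter)
    then show "\<forall>\<^sub>F z in at z0. \<forall>x\<in>space M. norm ((H z x - H z0 x) / (z - z0)) \<le> D x"
      using lip
    proof eventually_elim
      case (elim z)
      then show ?case by (auto simp: norm_divide divide_le_eq)
    qed
  qed fact
  show "\<forall>\<^sub>F z in at z0. (LINT x|M. (H z x - H z0 x) / (z - z0)) = (integral\<^sup>L M (H z) - integral\<^sup>L M (H z0)) / (z - z0)"
    using int by eventually_elim (simp add: int0)
qed

lemma norm_diff_le_of_bounded_holomorphic: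
  fixes F :: "complex \<Rightarrow> complex"
  assumes hol: "F holomorphic_on Op" and Op: "open Op" and r: "r > 0" and sub: "cball \<tau>0 (2 * r) \<subseteq> Op"
    and Fb: "\<And>z. z \<in> cball \<tau>0 (2 * r) \<Longrightarrow> cmod (F z) \<le> B" and w: "w \<in> ball \<tau>0 r"
  shows "cmod (F w - F \<tau>0) \<le> B / r * cmod (w - \<tau>0)"
proof -
  have db: "cmod (deriv F z) \<le> B / r" if z: "z \<in> ball \<tau>0 r" for z
  proof -
    have sub2: "cball z r \<subseteq> cball \<tau>0 (2 * r)"
    proof
      fix y assume "y \<in> cball z r"
      then have "dist z y \<le> r" by simp
      moreover have "dist \<tau>0 z < r" using z by simp
      ultimately have "dist \<tau>0 y \<le> 2 * r" using dist_triangle[of \<tau>0 y z] by linarith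
      then show "y \<in> cball \<tau>0 (2 * r)" by simp
    qed
    have "cmod ((deriv ^^ 1) F z) \<le> fact 1 * B / r ^ 1"
    proof (rule Cauchy_inequality)
      show "F holomorphic_on ball z r" using hol sub sub2 ball_subset_cball by (meson holomorphic_on_subset subset_trans)
      show "continuous_on (cball z r) F" using hol sub sub2
        by (meson holomorphic_on_imp_continuous_on holomorphic_on_subset subset_trans)
      show "0 < r" by fact
      show "\<And>x. cmod (z - x) = r \<Longrightarrow> cmod (F x) \<le> B"
        using sub2 Fb by (simp add: dist_norm subset_iff)
    qed
    then show ?thesis by simp
  qed
  show ?thesis
  proof (rule field_differentiable_bound[where S="ball \<tau>0 r" and f'="deriv F"])
    show "convex (ball \<tau>0 r)" by simp
    show "(F has_field_derivative deriv F z) (at z within ball \<tau>0 r)" if "z \<in> ball \<tau>0 r" for z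
    proof (rule holomorphic_derivI[OF hol Op])
      have "z \<in> cball \<tau>0 (2 * r)" using that r by simp
      then show "z \<in> Op" using sub by auto
    qed
    show "\<And>z. z \<in> ball \<tau>0 r \<Longrightarrow> cmod (deriv F z) \<le> B / r" using db by blast
    show "w \<in> ball \<tau>0 r" by fact
    show "\<tau>0 \<in> ball \<tau>0 r" using r by simp
  qed
qed

lemma tendsto_convolution_integrand:
  fixes F :: "complex \<Rightarrow> real \<Rightarrow> complex" and c :: "real \<Rightarrow> complex"
  assumes contF: "continuous_on (S \<times> UNIV) (\<lambda>p. F (fst p) (snd p))"
    and contc: "continuous_on UNIV c" and p0: "p0 \<in> S \<times> UNIV"
  shows "((\<lambda>p. c (snd p - x) * F (fst p) x) \<longlongrightarrow> c (snd p0 - x) * F (fst p0) x) (at p0 within S \<times> UNIV)"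
proof (intro tendsto_mult)
  show "((\<lambda>p. c (snd p - x)) \<longlongrightarrow> c (snd p0 - x)) (at p0 within S \<times> UNIV)"
    by (intro continuous_on_tendsto_compose[OF contc] tendsto_intros) auto
  have "\<forall>\<^sub>F p in at p0 within S \<times> UNIV. p \<in> S \<times> UNIV" by (auto simp: eventually_at_filter)
  then have "((\<lambda>p. (\<lambda>q. F (fst q) (snd q)) (fst p, x)) \<longlongrightarrow> (\<lambda>q. F (fst q) (snd q)) (fst p0, x))
      (at p0 within S \<times> UNIV)"
    using p0 by (intro continuous_on_tendsto_compose[OF contF] tendsto_intros)
      (auto elim!: eventually_mono)
  then show "((\<lambda>p. F (fst p) x) \<longlongrightarrow> F (fst p0) x) (at p0 within S \<times> UNIV)" by simp
qed

lemma integrable_convolution_param: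
  fixes F :: "complex \<Rightarrow> real \<Rightarrow> complex" and c :: "real \<Rightarrow> complex"
  assumes contF: "continuous_on (S \<times> UNIV) (\<lambda>p. F (fst p) (snd p))"
    and bound: "\<And>\<tau> x. \<tau> \<in> S \<Longrightarrow> cmod (F \<tau> x) \<le> W \<tau> * g x" and g: "integrable lborel g"
    and contc: "continuous_on UNIV c" and c_le: "\<And>y. cmod (c y) \<le> Bc" and \<tau>: "\<tau> \<in> S"
  shows "integrable lborel (\<lambda>x. c (m - x) * F \<tau> x)"
proof (rule integrable_bounded_by[where g="\<lambda>x. Bc * W \<tau> * g x"])
  have "Bc \<ge> 0" using c_le[of 0] norm_ge_zero order_trans by blast
  then show "norm (c (m - x) * F \<tau> x) \<le> Bc * W \<tau> * g x" for x
    using c_le bound[OF \<tau>] by (simp add: norm_mult mult.assoc mult_mono)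
  show "(\<lambda>x. c (m - x) * F \<tau> x) \<in> borel_measurable lborel"
    using contc continuous_on_Times_UNIV_slice[OF contF \<tau>] by (rule borel_measurable_shift_mult)
qed (use g in simp)

lemma continuous_on_convolution_param:
  fixes F :: "complex \<Rightarrow> real \<Rightarrow> complex" and c :: "real \<Rightarrow> complex"
  assumes contF: "continuous_on (S \<times> UNIV) (\<lambda>p. F (fst p) (snd p))"
    and bound: "\<And>\<tau> x. \<tau> \<in> S \<Longrightarrow> cmod (F \<tau> x) \<le> W \<tau> * g x"
    and contW: "continuous_on S W" and g: "integrable lborel g" "\<And>x. g x \<ge> 0"
    and contc: "continuous_on UNIV c" and c_le: "\<And>y. cmod (c y) \<le> Bc"
  shows "continuous_on (S \<times> UNIV) (\<lambda>p. LINT x|lborel. c (snd p - x) * F (fst p) x)"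
  unfolding continuous_on_def
proof
  fix p0 :: "complex \<times> real" assume p0: "p0 \<in> S \<times> UNIV"
  have Bc: "Bc \<ge> 0" using c_le[of 0] norm_ge_zero order_trans by blast
  have meas: "(\<lambda>x. c (m - x) * F \<tau> x) \<in> borel_measurable lborel" if "\<tau> \<in> S" for m \<tau>
    using contc continuous_on_Times_UNIV_slice[OF contF that] by (rule borel_measurable_shift_mult)
  have in_S: "\<forall>\<^sub>F p in at p0 within S \<times> UNIV. p \<in> S \<times> UNIV"
    by (auto simp: eventually_at_filter)
  have "continuous_on (S \<times> UNIV) (\<lambda>p. W (fst p))"
    by (intro continuous_on_compose2[OF contW] continuous_intros) auto
  then have "((\<lambda>p. W (fst p)) \<longlongrightarrow> W (fst p0)) (at p0 within S \<times> UNIV)"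
    using continuous_on_def p0 by blast
  then have W_near: "\<forall>\<^sub>F p in at p0 within S \<times> UNIV. W (fst p) < W (fst p0) + 1"
    by (rule order_tendstoD) simp
  show "((\<lambda>p. LINT x|lborel. c (snd p - x) * F (fst p) x) \<longlongrightarrow>
      (LINT x|lborel. c (snd p0 - x) * F (fst p0) x)) (at p0 within S \<times> UNIV)"
  proof (rule tendsto_integral_dominated[where w="\<lambda>x. Bc * (W (fst p0) + 1) * g x"])
    show "\<forall>\<^sub>F p in at p0 within S \<times> UNIV. (\<lambda>x. c (snd p - x) * F (fst p) x) \<in> borel_measurable lborel"
      using in_S by eventually_elim (rule meas, auto simp: mem_Times_iff)
    show "(\<lambda>x. c (snd p0 - x) * F (fst p0) x) \<in> borel_measurable lborel"
      using p0 by (intro meas) (auto simp: mem_Times_iff)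
    show "integrable lborel (\<lambda>x. Bc * (W (fst p0) + 1) * g x)" using g by simp
    show "((\<lambda>p. c (snd p - x) * F (fst p) x) \<longlongrightarrow> c (snd p0 - x) * F (fst p0) x) (at p0 within S \<times> UNIV)" for x
      using contF contc p0 by (rule tendsto_convolution_integrand)
    show "\<forall>\<^sub>F p in at p0 within S \<times> UNIV. \<forall>x\<in>space lborel.
        norm (c (snd p - x) * F (fst p) x) \<le> Bc * (W (fst p0) + 1) * g x"
      using in_S W_near
    proof eventually_elim
      case (elim p)
      have "norm (c (snd p - x) * F (fst p) x) \<le> Bc * (W (fst p0) + 1) * g x" for x
      proof -
        have "cmod (F (fst p) x) \<le> (W (fst p0) + 1) * g x"
          using bound[of "fst p" x] elim g(2)[of x] mult_right_mono[of "W (fst p)" "W (fst p0) + 1" "g x"]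
          by auto
        then show ?thesis using c_le Bc by (simp add: norm_mult mult.assoc mult_mono)
      qed
      then show ?case by blast
    qed
  qed
qed

lemma holomorphic_on_convolution_param:
  fixes F :: "complex \<Rightarrow> real \<Rightarrow> complex" and c :: "real \<Rightarrow> complex"
  assumes contF: "continuous_on (S \<times> UNIV) (\<lambda>p. F (fst p) (snd p))"
    and holF: "\<And>x. (\<lambda>\<tau>. F \<tau> x) holomorphic_on Op" and Op: "open Op" "Op \<subseteq> S"
    and bound: "\<And>\<tau> x. \<tau> \<in> S \<Longrightarrow> cmod (F \<tau> x) \<le> W \<tau> * g x"
    and contW: "continuous_on S W" and g: "integrable lborel g" "\<And>x. g x \<ge> 0"
    and contc: "continuous_on UNIV c" and c_le: "\<And>y. cmod (c y) \<le> Bc"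
  shows "(\<lambda>\<tau>. LINT x|lborel. c (m - x) * F \<tau> x) holomorphic_on Op"
  unfolding holomorphic_on_open[OF Op(1)]
proof
  fix \<tau>0 assume \<tau>0: "\<tau>0 \<in> Op"
  have Bc: "Bc \<ge> 0" using c_le[of 0] norm_ge_zero order_trans by blast
  obtain e where e: "e > 0" "cball \<tau>0 e \<subseteq> Op" using Op(1) \<tau>0 open_contains_cball by blast
  define r where "r = e / 2"
  have r: "r > 0" "cball \<tau>0 (2 * r) \<subseteq> Op" using e by (auto simp: r_def)
  have "compact (W ` cball \<tau>0 (2 * r))"
    using contW r Op(2) by (intro compact_continuous_image) (auto intro: continuous_on_subset)
  then obtain Wm where Wm: "\<And>z. z \<in> cball \<tau>0 (2 * r) \<Longrightarrow> W z \<le> Wm"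
    using compact_imp_bounded bounded_iff by (metis imageI real_norm_def abs_le_D1)
  have integrable: "integrable lborel (\<lambda>x. c (m - x) * F \<tau> x)" if "\<tau> \<in> S" for \<tau>
    using contF bound g(1) contc c_le that by (rule integrable_convolution_param)
  have ball_S: "ball \<tau>0 r \<subseteq> S" using r Op(2) by fastforce
  have near: "\<forall>\<^sub>F \<tau> in at \<tau>0. \<tau> \<in> ball \<tau>0 r"
    using r(1) by (auto simp: eventually_at dist_commute)
  have "((\<lambda>\<tau>. LINT x|lborel. c (m - x) * F \<tau> x) has_field_derivative
      (LINT x|lborel. c (m - x) * deriv (\<lambda>\<tau>. F \<tau> x) \<tau>0)) (at \<tau>0)"
  proof (rule has_field_derivative_integral_dominated[where D="\<lambda>x. Bc * (Wm * g x / r)"])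
    show "\<forall>\<^sub>F \<tau> in at \<tau>0. integrable lborel (\<lambda>x. c (m - x) * F \<tau> x)"
      using near by eventually_elim (use ball_S in \<open>auto intro: integrable\<close>)
    show "integrable lborel (\<lambda>x. c (m - x) * F \<tau>0 x)" using \<tau>0 Op(2) by (auto intro: integrable)
    show "((\<lambda>\<tau>. c (m - x) * F \<tau> x) has_field_derivative c (m - x) * deriv (\<lambda>\<tau>. F \<tau> x) \<tau>0) (at \<tau>0)" for x
      by (intro DERIV_cmult holomorphic_derivI[OF holF Op(1) \<tau>0])
    show "\<forall>\<^sub>F \<tau> in at \<tau>0. \<forall>x\<in>space lborel.
        norm (c (m - x) * F \<tau> x - c (m - x) * F \<tau>0 x) \<le> Bc * (Wm * g x / r) * norm (\<tau> - \<tau>0)"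
      using near
    proof eventually_elim
      case (elim \<tau>)
      have "cmod (F \<tau> x - F \<tau>0 x) \<le> Wm * g x / r * cmod (\<tau> - \<tau>0)" for x
      proof (rule norm_diff_le_of_bounded_holomorphic[OF holF Op(1) r _ elim])
        fix z assume z: "z \<in> cball \<tau>0 (2 * r)"
        have "cmod (F z x) \<le> W z * g x" using bound r(2) Op(2) z by blast
        also have "\<dots> \<le> Wm * g x" using Wm[OF z] g(2)[of x] by (intro mult_right_mono) auto
        finally show "cmod (F z x) \<le> Wm * g x" .
      qed
      then have "cmod (c (m - x)) * cmod (F \<tau> x - F \<tau>0 x) \<le> Bc * (Wm * g x / r * cmod (\<tau> - \<tau>0))" for x
        using c_le Bc by (intro mult_mono) auto
      then show ?case by (simp add: norm_mult right_diff_distrib[symmetric] mult.assoc)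
    qed
  qed (use g in simp)
  then show "\<exists>f'. ((\<lambda>\<tau>. LINT x|lborel. c (m - x) * F \<tau> x) has_field_derivative f') (at \<tau>0)" by blast
qed

section \<open>The operator on weighted spaces\<close>

lemma E_space_weighted_le:
  assumes "c \<in> E_space \<beta> \<mu>"
  shows "E_weight \<beta> \<mu> m * cmod (c m) \<le> E_norm \<beta> \<mu> c"
  using assms unfolding E_space_def E_norm_def E_weight_def by (auto intro!: cSUP_upper)

lemma E_space_norm_le:
  assumes "c \<in> E_space \<beta> \<mu>" "\<beta> \<ge> 0" "\<mu> \<ge> 0"
  shows "cmod (c m) \<le> E_norm \<beta> \<mu> c"
proof -
  have "1 \<le> (1 + \<bar>m\<bar>) powr \<mu>" using assms(3) by (simp add: ge_one_powr_ge_zero)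
  then have "1 \<le> E_weight \<beta> \<mu> m" using one_plus_abs_powr_le_E_weight[OF assms(2)] by (rule order_trans)
  then have "cmod (c m) \<le> E_weight \<beta> \<mu> m * cmod (c m)" by (simp add: mult_le_cancel_right1)
  then show ?thesis using E_space_weighted_le[OF assms(1)] by (rule order_trans)
qed

lemma E_norm_nonneg: "c \<in> E_space \<beta> \<mu> \<Longrightarrow> E_norm \<beta> \<mu> c \<ge> 0"
  using E_space_weighted_le[of c \<beta> \<mu> 0] E_weight_pos[of \<beta> \<mu> 0]
  by (meson less_imp_le mult_nonneg_nonneg norm_ge_zero order_trans)

lemma Exp_space_weighted_le:
  assumes "f \<in> Exp_space q U \<delta> \<kappa> \<beta> \<mu> \<alpha> \<rho>" "\<tau> \<in> U \<union> cball 0 \<rho>"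
  shows "E_weight \<beta> \<mu> m * tau_weight q \<delta> \<kappa> \<alpha> \<tau> * cmod (f \<tau> m) \<le> Exp_norm q U \<delta> \<kappa> \<beta> \<mu> \<alpha> \<rho> f"
proof -
  have "exp_weight q \<delta> \<kappa> \<beta> \<mu> \<alpha> (fst (\<tau>, m)) (snd (\<tau>, m)) * cmod (f (fst (\<tau>, m)) (snd (\<tau>, m)))
      \<le> Exp_norm q U \<delta> \<kappa> \<beta> \<mu> \<alpha> \<rho> f"
    unfolding Exp_norm_def using assms by (intro cSUP_upper) (auto simp: Exp_space_def)
  then show ?thesis by (simp add: exp_weight_eq)
qed

lemma
  assumes cont: "continuous_on ((U \<union> cball 0 \<rho>) \<times> UNIV) (\<lambda>p. g (fst p) (snd p))"
    and hol: "\<And>m. (\<lambda>\<tau>. g \<tau> m) holomorphic_on (U \<union> ball 0 \<rho>)"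
    and le: "\<And>\<tau> m. \<tau> \<in> U \<union> cball 0 \<rho> \<Longrightarrow> E_weight \<beta> \<mu> m * tau_weight q \<delta> \<kappa> \<alpha> \<tau> * cmod (g \<tau> m) \<le> M"
  shows Exp_spaceI: "g \<in> Exp_space q U \<delta> \<kappa> \<beta> \<mu> \<alpha> \<rho>"
    and Exp_norm_le: "\<rho> \<ge> 0 \<Longrightarrow> Exp_norm q U \<delta> \<kappa> \<beta> \<mu> \<alpha> \<rho> g \<le> M"
proof -
  have le': "exp_weight q \<delta> \<kappa> \<beta> \<mu> \<alpha> (fst p) (snd p) * cmod (g (fst p) (snd p)) \<le> M"
    if "p \<in> (U \<union> cball 0 \<rho>) \<times> UNIV" for p
    using le[of "fst p" "snd p"] that by (auto simp: exp_weight_eq mem_Times_iff)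
  show "g \<in> Exp_space q U \<delta> \<kappa> \<beta> \<mu> \<alpha> \<rho>"
    unfolding Exp_space_def mem_Collect_eq using cont hol le' by (intro conjI allI bdd_aboveI2) auto
  show "Exp_norm q U \<delta> \<kappa> \<beta> \<mu> \<alpha> \<rho> g \<le> M" if "\<rho> \<ge> 0"
    unfolding Exp_norm_def using le' that by (intro cSUP_least) auto
qed

lemma
  assumes "q > 1"
  shows q_dilation_pos: "0 < q powr (- real h / real k)"
    and q_dilation_le_one: "q powr (- real h / real k) \<le> 1"
proof -
  have "q powr (- real h / real k) \<le> q powr 0" using assms by (intro powr_mono) auto
  then show "0 < q powr (- real h / real k)" "q powr (- real h / real k) \<le> 1" using assms by auto
qed

lemma q_conv_eq_sum:
  "q_conv q k p1 c Q f \<tau> m = (\<Sum>h = 0..p1.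
     \<tau> ^ h / complex_of_real ((q powr (1 / real k)) powr (real h * (real h - 1) / 2)) *
     (LINT x|lborel. c h (m - x) *
        (poly Q (\<i> * complex_of_real x) * f (complex_of_real (q powr (- real h / real k)) * \<tau>) x)))"
  by (simp add: q_conv_def mult.assoc)

context
  fixes q \<delta> \<kappa> \<alpha> \<beta> \<mu> \<rho> AQ :: real and U :: "complex set" and Q :: "complex poly"
    and f :: "complex \<Rightarrow> real \<Rightarrow> complex"
  assumes q: "q > 1" and U_open: "open U"
    and U_scale: "\<And>\<tau> s. \<tau> \<in> U \<Longrightarrow> 0 < s \<Longrightarrow> complex_of_real s * \<tau> \<in> U"
    and \<delta>: "\<And>\<tau>. \<tau> \<in> U \<union> cball 0 \<rho> \<Longrightarrow> \<tau> + complex_of_real \<delta> \<noteq> 0"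
    and \<beta>: "\<beta> \<ge> 0" and \<mu>: "real (degree Q) + 1 < \<mu>"
    and AQ: "\<And>z. cmod (poly Q z) \<le> AQ * (1 + cmod z) ^ degree Q"
    and f: "f \<in> Exp_space q U \<delta> \<kappa> \<beta> \<mu> \<alpha> \<rho>"
begin

lemma Exp_norm_nonneg: "\<rho> \<ge> 0 \<Longrightarrow> Exp_norm q U \<delta> \<kappa> \<beta> \<mu> \<alpha> \<rho> f \<ge> 0"
  using Exp_space_weighted_le[OF f, of 0 0] E_weight_pos tau_weight_pos
  by (smt (verit) centre_in_cball mult_nonneg_nonneg norm_ge_zero UnI2)

lemma Q_mult_dilation_le:
  assumes \<tau>: "\<tau> \<in> U \<union> cball 0 \<rho>" and s: "0 < s" "s \<le> 1"
  shows "E_weight \<beta> \<mu> x * cmod (poly Q (\<i> * complex_of_real x) * f (complex_of_real s * \<tau>) x)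
    \<le> AQ * Exp_norm q U \<delta> \<kappa> \<beta> \<mu> \<alpha> \<rho> f / tau_weight q \<delta> \<kappa> \<alpha> (complex_of_real s * \<tau>) * (1 + \<bar>x\<bar>) ^ degree Q"
proof -
  define \<sigma> where "\<sigma> = complex_of_real s * \<tau>"
  have f_le: "E_weight \<beta> \<mu> x * cmod (f \<sigma> x) \<le> Exp_norm q U \<delta> \<kappa> \<beta> \<mu> \<alpha> \<rho> f / tau_weight q \<delta> \<kappa> \<alpha> \<sigma>"
    using Exp_space_weighted_le[OF f of_real_mult_mem_Un_cball[OF U_scale \<tau> s], of x] tau_weight_pos
    by (simp add: \<sigma>_def field_simps)
  have "cmod (poly Q (\<i> * complex_of_real x)) \<le> AQ * (1 + \<bar>x\<bar>) ^ degree Q"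
    using AQ[of "\<i> * complex_of_real x"] by (simp add: norm_mult)
  then have "cmod (poly Q (\<i> * complex_of_real x)) * (E_weight \<beta> \<mu> x * cmod (f \<sigma> x))
      \<le> AQ * (1 + \<bar>x\<bar>) ^ degree Q * (E_weight \<beta> \<mu> x * cmod (f \<sigma> x))"
    using E_weight_pos[of \<beta> \<mu> x] by (intro mult_right_mono) auto
  then have "E_weight \<beta> \<mu> x * cmod (poly Q (\<i> * complex_of_real x) * f \<sigma> x)
      \<le> AQ * (1 + \<bar>x\<bar>) ^ degree Q * (E_weight \<beta> \<mu> x * cmod (f \<sigma> x))"
    by (simp add: norm_mult mult.left_commute)
  also have "\<dots> \<le> AQ * (1 + \<bar>x\<bar>) ^ degree Q * (Exp_norm q U \<delta> \<kappa> \<beta> \<mu> \<alpha> \<rho> f / tau_weight q \<delta> \<kappa> \<alpha> \<sigma>)"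
  proof (rule mult_left_mono[OF f_le])
    have "0 \<le> AQ" using order_trans[OF norm_ge_zero AQ[of 0]] by simp
    then show "0 \<le> AQ * (1 + \<bar>x\<bar>) ^ degree Q" by simp
  qed
  finally show ?thesis by (simp add: \<sigma>_def mult_ac)
qed

lemma norm_Q_mult_dilation_le:
  assumes "\<tau> \<in> U \<union> cball 0 \<rho>" "0 < s" "s \<le> 1"
  shows "cmod (poly Q (\<i> * complex_of_real x) * f (complex_of_real s * \<tau>) x)
    \<le> AQ * Exp_norm q U \<delta> \<kappa> \<beta> \<mu> \<alpha> \<rho> f / tau_weight q \<delta> \<kappa> \<alpha> (complex_of_real s * \<tau>)
       * (1 + \<bar>x\<bar>) powr (-(\<mu> - degree Q))"
proof -
  let ?F = "cmod (poly Q (\<i> * complex_of_real x) * f (complex_of_real s * \<tau>) x)"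
  let ?X = "AQ * Exp_norm q U \<delta> \<kappa> \<beta> \<mu> \<alpha> \<rho> f / tau_weight q \<delta> \<kappa> \<alpha> (complex_of_real s * \<tau>)"
  have pos: "(1 + \<bar>x\<bar>) powr \<mu> > 0" by simp
  have "?F * (1 + \<bar>x\<bar>) powr \<mu> \<le> E_weight \<beta> \<mu> x * ?F"
    using one_plus_abs_powr_le_E_weight[OF \<beta>] by (subst mult.commute, rule mult_right_mono) simp
  also have "\<dots> \<le> ?X * (1 + \<bar>x\<bar>) ^ degree Q"
    using Q_mult_dilation_le[OF assms] .
  finally have "?F \<le> ?X * (1 + \<bar>x\<bar>) ^ degree Q / (1 + \<bar>x\<bar>) powr \<mu>"
    by (rule pos_le_divide_eq[THEN iffD2, OF pos])
  also have "\<dots> = ?X * ((1 + \<bar>x\<bar>) ^ degree Q / (1 + \<bar>x\<bar>) powr \<mu>)" by simp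
  also have "(1 + \<bar>x\<bar>) ^ degree Q / (1 + \<bar>x\<bar>) powr \<mu> = (1 + \<bar>x\<bar>) powr (-(\<mu> - degree Q))"
    by (simp add: powr_realpow[symmetric] powr_diff[symmetric] powr_minus_divide)
  finally show ?thesis .
qed

lemma continuous_on_Q_mult_dilation:
  assumes s: "0 < s" "s \<le> 1"
  shows "continuous_on ((U \<union> cball 0 \<rho>) \<times> UNIV)
    (\<lambda>p. poly Q (\<i> * complex_of_real (snd p)) * f (complex_of_real s * fst p) (snd p))"
proof -
  let ?S = "U \<union> cball 0 \<rho>"
  have "continuous_on (?S \<times> UNIV) (\<lambda>p. f (fst p) (snd p))" using f by (simp add: Exp_space_def)
  moreover have "(\<lambda>p. (complex_of_real s * fst p, snd p)) ` (?S \<times> UNIV) \<subseteq> ?S \<times> UNIV"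
  proof (rule image_subsetI)
    fix p assume "p \<in> ?S \<times> UNIV"
    then have "fst p \<in> ?S" by (metis mem_Times_iff)
    note of_real_mult_mem_Un_cball[OF U_scale this s]
    then show "(complex_of_real s * fst p, snd p) \<in> ?S \<times> UNIV" by simp
  qed
  ultimately have "continuous_on (?S \<times> UNIV)
      ((\<lambda>p. f (fst p) (snd p)) \<circ> (\<lambda>p. (complex_of_real s * fst p, snd p)))"
    by (intro continuous_on_compose continuous_intros) (rule continuous_on_subset)
  then have "continuous_on (?S \<times> UNIV) (\<lambda>p. f (complex_of_real s * fst p) (snd p))"
    by (simp add: o_def)
  then show ?thesis by (intro continuous_intros)
qed

lemma holomorphic_on_Q_mult_dilation:
  assumes s: "0 < s" "s \<le> 1"
  shows "(\<lambda>\<tau>. poly Q (\<i> * complex_of_real x) * f (complex_of_real s * \<tau>) x) holomorphic_on U \<union> ball 0 \<rho>"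
proof -
  have f_hol: "(\<lambda>\<tau>. f \<tau> x) holomorphic_on U \<union> ball 0 \<rho>" using f by (simp add: Exp_space_def)
  have dil_hol: "(\<lambda>\<tau>. complex_of_real s * \<tau>) holomorphic_on U \<union> ball 0 \<rho>"
    by (intro holomorphic_intros)
  have "(\<lambda>\<tau>. complex_of_real s * \<tau>) ` (U \<union> ball 0 \<rho>) \<subseteq> U \<union> ball 0 \<rho>"
    using of_real_mult_mem_Un_ball[OF U_scale _ s] by (rule image_subsetI)
  then have "((\<lambda>\<tau>. f \<tau> x) \<circ> (\<lambda>\<tau>. complex_of_real s * \<tau>)) holomorphic_on U \<union> ball 0 \<rho>"
    by (rule holomorphic_on_compose_gen[OF dil_hol f_hol])
  then show ?thesis unfolding o_def by (rule holomorphic_on_mult[OF holomorphic_on_const])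
qed

lemma continuous_on_tau_weight_dilation:
  assumes s: "0 < s" "s \<le> 1"
  shows "continuous_on (U \<union> cball 0 \<rho>) (\<lambda>\<tau>. tau_weight q \<delta> \<kappa> \<alpha> (complex_of_real s * \<tau>))"
proof -
  have "complex_of_real s * \<tau> + complex_of_real \<delta> \<noteq> 0" if "\<tau> \<in> U \<union> cball 0 \<rho>" for \<tau>
    using \<delta>[OF of_real_mult_mem_Un_cball[OF U_scale that s]] .
  then show ?thesis unfolding tau_weight_def using q by (intro continuous_intros) auto
qed

lemma q_conv_term_regular:
  assumes c: "c \<in> E_space \<beta> \<mu>" and s: "0 < s" "s \<le> 1"
  shows "continuous_on ((U \<union> cball 0 \<rho>) \<times> UNIV)
      (\<lambda>p. LINT x|lborel. c (snd p - x) * (poly Q (\<i> * complex_of_real x) * f (complex_of_real s * fst p) x))"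
    and "(\<lambda>\<tau>. LINT x|lborel. c (m - x) * (poly Q (\<i> * complex_of_real x) * f (complex_of_real s * \<tau>) x))
      holomorphic_on U \<union> ball 0 \<rho>"
proof -
  define W where "W \<tau> = AQ * Exp_norm q U \<delta> \<kappa> \<beta> \<mu> \<alpha> \<rho> f / tau_weight q \<delta> \<kappa> \<alpha> (complex_of_real s * \<tau>)" for \<tau>
  define g where "g x = (1 + \<bar>x\<bar>) powr (-(\<mu> - degree Q))" for x :: real
  have c_cont: "continuous_on UNIV c" using c by (simp add: E_space_def)
  have "\<mu> \<ge> 0" using \<mu> by simp
  then have c_le: "cmod (c y) \<le> E_norm \<beta> \<mu> c" for y using E_space_norm_le[OF c \<beta>] by blast
  have g: "integrable lborel g" "g x \<ge> 0" for x
    unfolding g_def by (rule integrable_one_plus_abs_powr) (use \<mu> in auto)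
  have F_le: "cmod (poly Q (\<i> * complex_of_real x) * f (complex_of_real s * \<tau>) x) \<le> W \<tau> * g x"
    if "\<tau> \<in> U \<union> cball 0 \<rho>" for \<tau> x
    unfolding W_def g_def using norm_Q_mult_dilation_le[OF that s] .
  have W_cont: "continuous_on (U \<union> cball 0 \<rho>) W"
    unfolding W_def using continuous_on_tau_weight_dilation[OF s] tau_weight_pos
    by (intro continuous_intros) (auto simp: less_imp_neq[symmetric])
  show "continuous_on ((U \<union> cball 0 \<rho>) \<times> UNIV)
      (\<lambda>p. LINT x|lborel. c (snd p - x) * (poly Q (\<i> * complex_of_real x) * f (complex_of_real s * fst p) x))"
    using continuous_on_convolution_param[OF continuous_on_Q_mult_dilation[OF s] F_le W_cont g c_cont c_le]
    by simp
  show "(\<lambda>\<tau>. LINT x|lborel. c (m - x) * (poly Q (\<i> * complex_of_real x) * f (complex_of_real s * \<tau>) x))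
      holomorphic_on U \<union> ball 0 \<rho>"
    using holomorphic_on_convolution_param[OF continuous_on_Q_mult_dilation[OF s]
        holomorphic_on_Q_mult_dilation[OF s] open_Un[OF U_open open_ball]
        Un_mono[OF order_refl ball_subset_cball] F_le W_cont g c_cont c_le]
    by simp
qed

lemma q_conv_summand_le:
  assumes c: "c \<in> E_space \<beta> \<mu>" and \<tau>: "\<tau> \<in> U \<union> cball 0 \<rho>" and s: "0 < s" "s \<le> 1"
    and b: "cmod (b m) * (1 + \<bar>m\<bar>) ^ degree Q \<le> BR"
    and coeff: "cmod a * tau_weight q \<delta> \<kappa> \<alpha> \<tau> \<le> K * tau_weight q \<delta> \<kappa> \<alpha> (complex_of_real s * \<tau>)" "K \<ge> 0"
  shows "E_weight \<beta> \<mu> m * tau_weight q \<delta> \<kappa> \<alpha> \<tau> * cmod (b m * (a *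
      (LINT x|lborel. c (m - x) * (poly Q (\<i> * complex_of_real x) * f (complex_of_real s * \<tau>) x))))
    \<le> BR * K * decay_conv_const \<mu> (\<mu> - degree Q) * AQ * E_norm \<beta> \<mu> c * Exp_norm q U \<delta> \<kappa> \<beta> \<mu> \<alpha> \<rho> f"
proof -
  define n where "n = degree Q"
  define \<sigma> where "\<sigma> = complex_of_real s * \<tau>"
  define I where "I = (LINT x|lborel. c (m - x) * (poly Q (\<i> * complex_of_real x) * f \<sigma> x))"
  define NF where "NF = AQ * Exp_norm q U \<delta> \<kappa> \<beta> \<mu> \<alpha> \<rho> f / tau_weight q \<delta> \<kappa> \<alpha> \<sigma>"
  have conv: "(1 + \<bar>m\<bar>) powr (\<mu> - n) * exp (\<beta> * \<bar>m\<bar>) * cmod I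
      \<le> decay_conv_const \<mu> (\<mu> - n) * E_norm \<beta> \<mu> c * NF"
    unfolding I_def n_def NF_def \<sigma>_def
  proof (rule weighted_convolution_le[OF \<beta> \<mu>])
    show "continuous_on UNIV c" using c by (simp add: E_space_def)
    show "E_weight \<beta> \<mu> y * cmod (c y) \<le> E_norm \<beta> \<mu> c" for y using E_space_weighted_le[OF c] .
    have "continuous_on ((U \<union> cball 0 \<rho>) \<times> UNIV) (\<lambda>p. f (fst p) (snd p))" using f by (simp add: Exp_space_def)
    then have "continuous_on UNIV (f \<sigma>)"
      unfolding \<sigma>_def using of_real_mult_mem_Un_cball[OF U_scale \<tau> s] by (rule continuous_on_Times_UNIV_slice)
    then have "continuous_on UNIV (\<lambda>x. poly Q (\<i> * complex_of_real x) * f \<sigma> x)"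
      by (intro continuous_intros) auto
    then show "(\<lambda>x. poly Q (\<i> * complex_of_real x) * f (complex_of_real s * \<tau>) x) \<in> borel_measurable lborel"
      by (simp add: \<sigma>_def borel_measurable_continuous_onI)
  qed (use Q_mult_dilation_le[OF \<tau> s] in \<open>simp add: mult_ac\<close>)
  have "BR \<ge> 0" using b by (smt (verit) mult_nonneg_nonneg norm_ge_zero zero_le_power)
  have "E_weight \<beta> \<mu> m * tau_weight q \<delta> \<kappa> \<alpha> \<tau> * cmod (b m * (a * I))
      = (cmod (b m) * (1 + \<bar>m\<bar>) ^ n) * (cmod a * tau_weight q \<delta> \<kappa> \<alpha> \<tau>)
        * ((1 + \<bar>m\<bar>) powr (\<mu> - n) * exp (\<beta> * \<bar>m\<bar>) * cmod I)"
    by (simp add: E_weight_split[of \<beta> \<mu> m n] norm_mult mult_ac)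
  also have "\<dots> \<le> BR * (K * tau_weight q \<delta> \<kappa> \<alpha> \<sigma>) * (decay_conv_const \<mu> (\<mu> - n) * E_norm \<beta> \<mu> c * NF)"
  proof (rule mult_mono)
    show "cmod (b m) * (1 + \<bar>m\<bar>) ^ n * (cmod a * tau_weight q \<delta> \<kappa> \<alpha> \<tau>) \<le> BR * (K * tau_weight q \<delta> \<kappa> \<alpha> \<sigma>)"
      using b coeff \<open>BR \<ge> 0\<close> unfolding n_def \<sigma>_def
      by (intro mult_mono[OF b coeff(1)]) (auto intro!: mult_nonneg_nonneg less_imp_le[OF tau_weight_pos])
    show "0 \<le> BR * (K * tau_weight q \<delta> \<kappa> \<alpha> \<sigma>)"
      using coeff(2) \<open>BR \<ge> 0\<close> by (intro mult_nonneg_nonneg less_imp_le[OF tau_weight_pos])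
  qed (use conv in auto)
  also have "\<dots> = BR * K * decay_conv_const \<mu> (\<mu> - n) * AQ * E_norm \<beta> \<mu> c * Exp_norm q U \<delta> \<kappa> \<beta> \<mu> \<alpha> \<rho> f"
    using tau_weight_pos[of q \<delta> \<kappa> \<alpha> \<sigma>] by (simp add: NF_def field_simps)
  finally show ?thesis by (simp add: I_def \<sigma>_def n_def)
qed

context
  fixes k p1 :: nat and b :: "real \<Rightarrow> complex" and c :: "nat \<Rightarrow> real \<Rightarrow> complex"
    and Kt C :: "nat \<Rightarrow> real" and BR :: real
  assumes b_le: "\<And>m. cmod (b m) * (1 + \<bar>m\<bar>) ^ degree Q \<le> BR"
    and c: "\<And>h. h \<le> p1 \<Longrightarrow> c h \<in> E_space \<beta> \<mu>"
    and Kt: "\<And>h \<tau>. \<tau> \<in> U \<union> cball 0 \<rho> \<Longrightarrow>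
      cmod (\<tau> ^ h / complex_of_real ((q powr (1 / real k)) powr (real h * (real h - 1) / 2)))
        * tau_weight q \<delta> \<kappa> \<alpha> \<tau> \<le> Kt h * tau_weight q \<delta> \<kappa> \<alpha> (complex_of_real (q powr (- real h / real k)) * \<tau>)"
      "\<And>h. Kt h \<ge> 0"
    and C: "\<And>h. BR * Kt h * decay_conv_const \<mu> (\<mu> - degree Q) * AQ \<le> C h"
begin

lemma q_conv_weighted_le:
  assumes \<rho>: "\<rho> \<ge> 0" and \<tau>: "\<tau> \<in> U \<union> cball 0 \<rho>"
  shows "E_weight \<beta> \<mu> m * tau_weight q \<delta> \<kappa> \<alpha> \<tau> * cmod (b m * q_conv q k p1 c Q f \<tau> m)
    \<le> (\<Sum>h = 0..p1. C h * E_norm \<beta> \<mu> (c h)) * Exp_norm q U \<delta> \<kappa> \<beta> \<mu> \<alpha> \<rho> f"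
proof -
  define s where "s h = q powr (- real h / real k)" for h :: nat
  define a where "a h = \<tau> ^ h / complex_of_real ((q powr (1 / real k)) powr (real h * (real h - 1) / 2))"
    for h
  define G where "G h = (LINT x|lborel. c h (m - x) *
      (poly Q (\<i> * complex_of_real x) * f (complex_of_real (s h) * \<tau>) x))" for h
  define Nf where "Nf = Exp_norm q U \<delta> \<kappa> \<beta> \<mu> \<alpha> \<rho> f"
  define w where "w = E_weight \<beta> \<mu> m * tau_weight q \<delta> \<kappa> \<alpha> \<tau>"
  have summand: "w * cmod (b m * (a h * G h)) \<le> C h * E_norm \<beta> \<mu> (c h) * Nf" if h: "h \<le> p1" for h
  proof -
    have "w * cmod (b m * (a h * G h))
        \<le> BR * Kt h * decay_conv_const \<mu> (\<mu> - degree Q) * AQ * E_norm \<beta> \<mu> (c h) * Nf"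
      unfolding w_def G_def Nf_def s_def a_def
      using q_dilation_pos[OF q] q_dilation_le_one[OF q]
      by (intro q_conv_summand_le[OF c[OF h] \<tau> _ _ b_le Kt(1)[OF \<tau>] Kt(2)])
    also have "\<dots> \<le> C h * E_norm \<beta> \<mu> (c h) * Nf"
      using C E_norm_nonneg[OF c[OF h]] Exp_norm_nonneg[OF \<rho>] by (simp add: Nf_def mult_right_mono)
    finally show ?thesis .
  qed
  have "cmod (b m * q_conv q k p1 c Q f \<tau> m) \<le> (\<Sum>h = 0..p1. cmod (b m * (a h * G h)))"
    unfolding q_conv_eq_sum a_def G_def s_def sum_distrib_left by (rule norm_sum)
  then have "w * cmod (b m * q_conv q k p1 c Q f \<tau> m) \<le> w * (\<Sum>h = 0..p1. cmod (b m * (a h * G h)))"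
    using E_weight_pos[of \<beta> \<mu> m] tau_weight_pos[of q \<delta> \<kappa> \<alpha> \<tau>] by (intro mult_left_mono) (auto simp: w_def)
  also have "\<dots> \<le> (\<Sum>h = 0..p1. C h * E_norm \<beta> \<mu> (c h) * Nf)"
    unfolding sum_distrib_left using summand by (intro sum_mono) auto
  finally show ?thesis by (simp add: w_def Nf_def sum_distrib_right)
qed

lemma b_q_conv_Exp_space:
  assumes \<rho>: "\<rho> > 0" and b: "continuous_on UNIV b"
  shows "(\<lambda>\<tau> m. b m * q_conv q k p1 c Q f \<tau> m) \<in> Exp_space q U \<delta> \<kappa> \<beta> \<mu> \<alpha> \<rho>"
    and "Exp_norm q U \<delta> \<kappa> \<beta> \<mu> \<alpha> \<rho> (\<lambda>\<tau> m. b m * q_conv q k p1 c Q f \<tau> m)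
      \<le> (\<Sum>h = 0..p1. C h * E_norm \<beta> \<mu> (c h)) * Exp_norm q U \<delta> \<kappa> \<beta> \<mu> \<alpha> \<rho> f"
proof -
  define G where "G h \<tau> m = (LINT x|lborel. c h (m - x) *
      (poly Q (\<i> * complex_of_real x) * f (complex_of_real (q powr (- real h / real k)) * \<tau>) x))" for h \<tau> m
  define Op where "Op = U \<union> ball 0 \<rho>"
  have G_cont: "continuous_on ((U \<union> cball 0 \<rho>) \<times> UNIV) (\<lambda>p. G h (fst p) (snd p))" if "h \<le> p1" for h
    unfolding G_def using q_conv_term_regular(1)[OF c[OF that] q_dilation_pos[OF q] q_dilation_le_one[OF q]] .
  have G_hol: "(\<lambda>\<tau>. G h \<tau> m) holomorphic_on Op" if "h \<le> p1" for h m
    unfolding G_def Op_def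
    using q_conv_term_regular(2)[OF c[OF that] q_dilation_pos[OF q] q_dilation_le_one[OF q]] .
  have cont: "continuous_on ((U \<union> cball 0 \<rho>) \<times> UNIV) (\<lambda>p. b (snd p) * q_conv q k p1 c Q f (fst p) (snd p))"
    unfolding q_conv_eq_sum G_def[symmetric] using G_cont q
    by (intro continuous_intros continuous_on_compose2[OF b]) (auto simp: powr_def)
  have hol: "(\<lambda>\<tau>. b m * q_conv q k p1 c Q f \<tau> m) holomorphic_on U \<union> ball 0 \<rho>" for m
    unfolding q_conv_eq_sum G_def[symmetric] Op_def[symmetric]
    using G_hol q by (intro holomorphic_intros) (auto simp: powr_def)
  have bound: "E_weight \<beta> \<mu> m * tau_weight q \<delta> \<kappa> \<alpha> \<tau> * cmod (b m * q_conv q k p1 c Q f \<tau> m)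
      \<le> (\<Sum>h = 0..p1. C h * E_norm \<beta> \<mu> (c h)) * Exp_norm q U \<delta> \<kappa> \<beta> \<mu> \<alpha> \<rho> f"
    if "\<tau> \<in> U \<union> cball 0 \<rho>" for \<tau> m
    using \<rho> that by (intro q_conv_weighted_le) auto
  show "(\<lambda>\<tau> m. b m * q_conv q k p1 c Q f \<tau> m) \<in> Exp_space q U \<delta> \<kappa> \<beta> \<mu> \<alpha> \<rho>"
    using cont hol bound by (rule Exp_spaceI)
  show "Exp_norm q U \<delta> \<kappa> \<beta> \<mu> \<alpha> \<rho> (\<lambda>\<tau> m. b m * q_conv q k p1 c Q f \<tau> m)
      \<le> (\<Sum>h = 0..p1. C h * E_norm \<beta> \<mu> (c h)) * Exp_norm q U \<delta> \<kappa> \<beta> \<mu> \<alpha> \<rho> f"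
    using Exp_norm_le[OF cont hol bound] \<rho> by simp
qed

end

end

theorem proposition3:
  fixes q \<mu> \<alpha> \<rho> d a \<delta> \<kappa> :: real
    and k p1 :: nat
    and Q R :: "complex poly"
  assumes "q > 1" and "\<rho> > 0"
    and "0 < a" and "a < pi"
    and "infdist (- complex_of_real \<delta>) (sector d a \<union> ball 0 \<rho>) > 0"
    and "degree R \<ge> degree Q"
    and "\<forall>m::real. poly R (\<i> * complex_of_real m) \<noteq> 0"
    and "\<mu> > real (degree Q) + 1"
    and "1 < k" and "real k \<le> \<kappa>"
  shows "\<exists>C :: nat \<Rightarrow> real. (\<forall>h\<in>{0..p1}. C h > 0) \<and>
    (\<forall>(\<beta>::real) (b :: real \<Rightarrow> complex) (c :: nat \<Rightarrow> real \<Rightarrow> complex) f.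
       \<beta> > 0 \<longrightarrow> continuous_on UNIV b \<longrightarrow>
       (\<forall>m. cmod (b m) \<le> 1 / cmod (poly R (\<i> * complex_of_real m))) \<longrightarrow>
       (\<forall>h\<in>{0..p1}. c h \<in> E_space \<beta> \<mu>) \<longrightarrow>
       f \<in> Exp_space q (sector d a) \<delta> \<kappa> \<beta> \<mu> \<alpha> \<rho> \<longrightarrow>
       (\<lambda>\<tau> m. b m * q_conv q k p1 c Q f \<tau> m) \<in> Exp_space q (sector d a) \<delta> \<kappa> \<beta> \<mu> \<alpha> \<rho> \<and>
       Exp_norm q (sector d a) \<delta> \<kappa> \<beta> \<mu> \<alpha> \<rho> (\<lambda>\<tau> m. b m * q_conv q k p1 c Q f \<tau> m)
         \<le> (\<Sum>h = 0..p1. C h * E_norm \<beta> \<mu> (c h)) * Exp_norm q (sector d a) \<delta> \<kappa> \<beta> \<mu> \<alpha> \<rho> f)"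
proof -
  have k: "k > 0" using assms(9) by simp
  obtain AQ where AQ: "AQ > 0" "\<And>z. cmod (poly Q z) \<le> AQ * (1 + cmod z) ^ degree Q"
    using poly_bound_by_degree by blast
  obtain BR where BR: "BR > 0" "\<And>m. (1 + \<bar>m\<bar>) ^ degree Q / cmod (poly R (\<i> * complex_of_real m)) \<le> BR"
    using poly_degree_ratio_bounded[OF assms(6,7)] by blast
  obtain Kt where Kt: "\<And>h. Kt h > 0" "\<And>h \<tau>. \<tau> \<in> sector d a \<union> cball 0 \<rho> \<Longrightarrow>
      cmod (\<tau> ^ h / complex_of_real ((q powr (1 / real k)) powr (real h * (real h - 1) / 2)))
        * tau_weight q \<delta> \<kappa> \<alpha> \<tau> \<le> Kt h * tau_weight q \<delta> \<kappa> \<alpha> (complex_of_real (q powr (- real h / real k)) * \<tau>)"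
    using sector_tau_weight_q_dilation_le[OF assms(1) k assms(10) assms(2) assms(5)] by blast
  define C where "C h = BR * Kt h * decay_conv_const \<mu> (\<mu> - degree Q) * AQ + 1" for h
  show ?thesis
  proof (intro exI[of _ C] conjI ballI allI impI)
    show "C h > 0" for h
    proof -
      have "0 \<le> BR * Kt h * decay_conv_const \<mu> (\<mu> - degree Q) * AQ"
        using BR(1) Kt(1)[of h] AQ(1) decay_conv_const_nonneg by simp
      then show ?thesis by (simp add: C_def)
    qed
    fix \<beta> b c f
    assume \<beta>: "\<beta> > 0" and b: "continuous_on UNIV b"
      and b_R: "\<forall>m. cmod (b m) \<le> 1 / cmod (poly R (\<i> * complex_of_real m))"
      and c: "\<forall>h\<in>{0..p1}. c h \<in> E_space \<beta> \<mu>" and f: "f \<in> Exp_space q (sector d a) \<delta> \<kappa> \<beta> \<mu> \<alpha> \<rho>"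
    have b_le: "cmod (b m) * (1 + \<bar>m\<bar>) ^ degree Q \<le> BR" for m
      using mult_right_mono[OF spec[OF b_R, of m], of "(1 + \<bar>m\<bar>) ^ degree Q"] BR(2)[of m] by simp
    have c': "c h \<in> E_space \<beta> \<mu>" if "h \<le> p1" for h using c that by simp
    have C_ge: "BR * Kt h * decay_conv_const \<mu> (\<mu> - degree Q) * AQ \<le> C h" for h by (simp add: C_def)
    note b_q_conv = b_q_conv_Exp_space[OF assms(1) open_sector of_real_mult_mem_sector
        sector_add_of_real_nonzero[OF assms(2,5)] less_imp_le[OF \<beta>] assms(8) AQ(2) f
        b_le c' Kt(2) less_imp_le[OF Kt(1)] C_ge assms(2) b]
    show "(\<lambda>\<tau> m. b m * q_conv q k p1 c Q f \<tau> m) \<in> Exp_space q (sector d a) \<delta> \<kappa> \<beta> \<mu> \<alpha> \<rho>"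
      by (rule b_q_conv(1))
    show "Exp_norm q (sector d a) \<delta> \<kappa> \<beta> \<mu> \<alpha> \<rho> (\<lambda>\<tau> m. b m * q_conv q k p1 c Q f \<tau> m)
        \<le> (\<Sum>h = 0..p1. C h * E_norm \<beta> \<mu> (c h)) * Exp_norm q (sector d a) \<delta> \<kappa> \<beta> \<mu> \<alpha> \<rho> f"
      by (rule b_q_conv(2))
  qed
qed

end
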